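(* Let $M$ be a pointed metric space which is not both bounded and uniformly discrete (i.e. $M$ is unbounded or $\inf\{d(x,y):x,y\in M,\ x\neq y\}=0$). Then $\mathcal F(M)\widehat{\otimes}_\pi X$ is octahedral for every non-zero Banach space $X$.
   Context: All Banach spaces are real. $\mathcal F(M)$ is the Lipschitz-free space over the pointed metric space $M$ (the closed linear span of the evaluation functionals $\delta_p$, $p\in M$, in $\mathrm{Lip}_0(M)^*$, where $\mathrm{Lip}_0(M)$ is the space of real Lipschitz functions vanishing at the base point with the Lipschitz-constant norm), and $\widehat{\otimes}_\pi$ is the projective tensor product. A metric space is uniformly discrete if $\inf\{d(x,y):x\neq y\}>0$. A Banach space $Z$ is octahedral if for every $x_1,\dots,x_n\in S_Z$ and $\varepsilon>0$ there is $y\in S_Z$ with $\|x_i-y\|\ge 2-\varepsilon$ for all $i=1,\dots,n$. *)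

theory Defs
  imports "HOL-Analysis.Analysis"
begin

text \<open>Generic device: a normed space realised as the closed linear span of a set S of
  functionals inside the dual of a normed function space W with closed unit ball U.\<close>

definition dual_closed_span :: "'f set \<Rightarrow> 'f set \<Rightarrow> ('f \<Rightarrow> real) set \<Rightarrow> ('f \<Rightarrow> real) set" where
  "dual_closed_span W U S =
     {\<phi>. (\<forall>f. f \<notin> W \<longrightarrow> \<phi> f = 0) \<and>
          (\<forall>\<epsilon>>0. \<exists>(n::nat) c s. (\<forall>i<n. s i \<in> S) \<and>
               (\<forall>f\<in>U. \<bar>\<phi> f - (\<Sum>i<n. c i * s i f)\<bar> \<le> \<epsilon>))}"

definition dual_norm :: "'f set \<Rightarrow> ('f \<Rightarrow> real) \<Rightarrow> real" where
  "dual_norm U \<phi> = Sup ((\<lambda>f. \<bar>\<phi> f\<bar>) ` U)"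

definition Lip0 :: "'a::metric_space set \<Rightarrow> 'a \<Rightarrow> ('a \<Rightarrow> real) set" where
  "Lip0 M p0 = {f. (\<exists>C. lipschitz_on C M f) \<and> f p0 = 0 \<and> (\<forall>x. x \<notin> M \<longrightarrow> f x = 0)}"

definition Lip0_ball :: "'a::metric_space set \<Rightarrow> 'a \<Rightarrow> ('a \<Rightarrow> real) set" where
  "Lip0_ball M p0 = {f \<in> Lip0 M p0. lipschitz_on 1 M f}"

definition evalF :: "'a::metric_space set \<Rightarrow> 'a \<Rightarrow> 'a \<Rightarrow> ('a \<Rightarrow> real) \<Rightarrow> real" where
  "evalF M p0 p = (\<lambda>f. if f \<in> Lip0 M p0 then f p else 0)"

definition FreeSp :: "'a::metric_space set \<Rightarrow> 'a \<Rightarrow> (('a \<Rightarrow> real) \<Rightarrow> real) set" where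
  "FreeSp M p0 = dual_closed_span (Lip0 M p0) (Lip0_ball M p0) {evalF M p0 p | p. p \<in> M}"

definition FreeNorm :: "'a::metric_space set \<Rightarrow> 'a \<Rightarrow> (('a \<Rightarrow> real) \<Rightarrow> real) \<Rightarrow> real" where
  "FreeNorm M p0 = dual_norm (Lip0_ball M p0)"

definition bounded_bilinear_forms ::
  "('f \<Rightarrow> real) set \<Rightarrow> (('f \<Rightarrow> real) \<Rightarrow> real) \<Rightarrow> (('f \<Rightarrow> real) \<Rightarrow> 'x::real_normed_vector \<Rightarrow> real) set" where
  "bounded_bilinear_forms E nE =
     {B. (\<forall>e x. e \<notin> E \<longrightarrow> B e x = 0) \<and>
         (\<forall>e\<in>E. linear (B e)) \<and>
         (\<forall>x. \<forall>e\<in>E. \<forall>e'\<in>E. \<forall>a b. B (\<lambda>t. a * e t + b * e' t) x = a * B e x + b * B e' x) \<and>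
         (\<exists>C. \<forall>e\<in>E. \<forall>x. \<bar>B e x\<bar> \<le> C * nE e * norm x)}"

definition bilinear_ball ::
  "('f \<Rightarrow> real) set \<Rightarrow> (('f \<Rightarrow> real) \<Rightarrow> real) \<Rightarrow> (('f \<Rightarrow> real) \<Rightarrow> 'x::real_normed_vector \<Rightarrow> real) set" where
  "bilinear_ball E nE = {B \<in> bounded_bilinear_forms E nE. \<forall>e\<in>E. \<forall>x. \<bar>B e x\<bar> \<le> nE e * norm x}"

text \<open>Projective tensor product E (x)_pi X, realised (isometrically, via
  (E (x)_pi X)^* = Bil(E x X)) as the closed linear span of the elementary tensors
  e (x) x : B |-> B e x in the dual of the space of bounded bilinear forms.\<close>

definition proj_tensor ::
  "('f \<Rightarrow> real) set \<Rightarrow> (('f \<Rightarrow> real) \<Rightarrow> real) \<Rightarrow>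
   ((('f \<Rightarrow> real) \<Rightarrow> 'x::real_normed_vector \<Rightarrow> real) \<Rightarrow> real) set" where
  "proj_tensor E nE =
     dual_closed_span (bounded_bilinear_forms E nE) (bilinear_ball E nE)
       {(\<lambda>B. if B \<in> bounded_bilinear_forms E nE then B e x else 0) | e x. e \<in> E}"

definition proj_tensor_norm ::
  "('f \<Rightarrow> real) set \<Rightarrow> (('f \<Rightarrow> real) \<Rightarrow> real) \<Rightarrow>
   ((('f \<Rightarrow> real) \<Rightarrow> 'x::real_normed_vector \<Rightarrow> real) \<Rightarrow> real) \<Rightarrow> real" where
  "proj_tensor_norm E nE = dual_norm (bilinear_ball E nE)"

definition octahedral :: "('g \<Rightarrow> real) set \<Rightarrow> (('g \<Rightarrow> real) \<Rightarrow> real) \<Rightarrow> bool" where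
  "octahedral Z N \<longleftrightarrow>
     (\<forall>xs \<epsilon>. set xs \<subseteq> {z \<in> Z. N z = 1} \<and> \<epsilon> > 0 \<longrightarrow>
        (\<exists>y\<in>Z. N y = 1 \<and> (\<forall>x\<in>set xs. N (\<lambda>t. x t - y t) \<ge> 2 - \<epsilon>)))"

definition uniformly_discrete :: "'a::metric_space set \<Rightarrow> bool" where
  "uniformly_discrete M \<longleftrightarrow> (\<exists>r>0. \<forall>x\<in>M. \<forall>y\<in>M. x \<noteq> y \<longrightarrow> r \<le> dist x y)"

end

theory Submission
  imports Defs
begin

text \<open>Let z_1, ..., z_n be unit vectors of F(M) \<otimes>\<pi> X and \<epsilon> > 0. Each z_i is approximated by
  a finite sum of elementary tensors \<delta>_p \<otimes> x with p in a finite set Q \<subseteq> M, and is almost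
  normed by a bilinear form B_i of norm at most 1. Since M is unbounded or not uniformly discrete,
  there are points u \<noteq> c of M and a cut-off a with a u = 1 and a = 0 on Q - {c} whose oscillation
  near c is small compared with the distance to c. Fix a unit vector x1 and a norming functional
  \<phi> for it. Moving each B_i, where a is positive, towards the form (\<delta>_m, x) \<mapsto> B_i(\<delta>_c, x) -
  d(m, c) \<phi>(x) and dividing by 1 + 2\<kappa> yields forms of norm at most 1 that are proportional to
  B_i on Q and take the value -d(u, c) / (1 + 2\<kappa>) on (\<delta>_u - \<delta>_c) \<otimes> x1. Hence the normalisation
  y of that dipole satisfies norm (z_i - y) \<ge> 2 - \<epsilon> once \<kappa> is small.\<close>

section \<open>Hahn--Banach\<close>

text \<open>Hahn--Banach is proved by Zorn's lemma on graphs of linear functionals on subspaces that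
  are dominated by the norm and take the value norm x0 at x0.\<close>

definition dominated_graph :: "'x::real_normed_vector \<Rightarrow> ('x \<times> real) set \<Rightarrow> bool" where
  "dominated_graph x0 G \<longleftrightarrow>
     (\<forall>x a b. (x, a) \<in> G \<longrightarrow> (x, b) \<in> G \<longrightarrow> a = b) \<and> (x0, norm x0) \<in> G \<and>
     (\<forall>x a y b. (x, a) \<in> G \<longrightarrow> (y, b) \<in> G \<longrightarrow> (x + y, a + b) \<in> G) \<and>
     (\<forall>x a c. (x, a) \<in> G \<longrightarrow> (c *\<^sub>R x, c * a) \<in> G) \<and>
     (\<forall>x a. (x, a) \<in> G \<longrightarrow> a \<le> norm x)"

lemma dominated_graphD:
  assumes "dominated_graph x0 G"
  shows "(x, a) \<in> G \<Longrightarrow> (x, b) \<in> G \<Longrightarrow> a = b"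
    and "(x0, norm x0) \<in> G"
    and "(x, a) \<in> G \<Longrightarrow> (y, b) \<in> G \<Longrightarrow> (x + y, a + b) \<in> G"
    and "(x, a) \<in> G \<Longrightarrow> (c *\<^sub>R x, c * a) \<in> G"
    and "(x, a) \<in> G \<Longrightarrow> a \<le> norm x"
  using assms unfolding dominated_graph_def by fast+

lemma dominated_graph_zero: "dominated_graph x0 G \<Longrightarrow> (0, 0) \<in> G"
  using dominated_graphD(4)[OF _ dominated_graphD(2), of x0 G x0 0] by simp

lemma dominated_graph_extension_value:
  fixes y :: "'x::real_normed_vector"
  assumes G: "dominated_graph x0 G"
  obtains c where "\<And>x a. (x, a) \<in> G \<Longrightarrow> a - norm (x - y) \<le> c"
    and "\<And>z b. (z, b) \<in> G \<Longrightarrow> c \<le> norm (z + y) - b"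
proof -
  have key: "a - norm (x - y) \<le> norm (z + y) - b" if "(x, a) \<in> G" "(z, b) \<in> G" for x a z b
  proof -
    have "a + b \<le> norm (x + z)" using dominated_graphD(5)[OF G dominated_graphD(3)[OF G that]] .
    also have "\<dots> \<le> norm (x - y) + norm (z + y)"
      using norm_triangle_ineq[of "x - y" "z + y"] by simp
    finally show ?thesis by simp
  qed
  define S where "S = (\<lambda>(x, a). a - norm (x - y)) ` G"
  have "S \<noteq> {}" using dominated_graph_zero[OF G] unfolding S_def by blast
  moreover have "bdd_above S"
    unfolding S_def bdd_above_def using key[OF _ dominated_graph_zero[OF G]] by fastforce
  ultimately show thesis
    using key by (intro that[of "Sup S"] cSup_upper cSup_least) (force simp: S_def)+
qed

lemma dominated_graph_extension_bound:
  fixes y :: "'x::real_normed_vector"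
  assumes G: "dominated_graph x0 G" and xa: "(x, a) \<in> G"
    and lower: "\<And>x a. (x, a) \<in> G \<Longrightarrow> a - norm (x - y) \<le> c"
    and upper: "\<And>z b. (z, b) \<in> G \<Longrightarrow> c \<le> norm (z + y) - b"
  shows "a + t * c \<le> norm (x + t *\<^sub>R y)"
proof (cases t "0::real" rule: linorder_cases)
  case less
  have "(-1/t) * a - norm ((-1/t) *\<^sub>R x - y) \<le> c"
    using lower[OF dominated_graphD(4)[OF G xa]] .
  then have "(-t) * ((-1/t) * a - norm ((-1/t) *\<^sub>R x - y)) \<le> (-t) * c"
    using less by (simp add: mult_left_mono)
  moreover have "(-t) * ((-1/t) * a - norm ((-1/t) *\<^sub>R x - y)) = a - norm (x + t *\<^sub>R y)"
  proof -
    have "(-t) * norm ((-1/t) *\<^sub>R x - y) = norm ((-t) *\<^sub>R ((-1/t) *\<^sub>R x - y))"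
      using less by simp
    also have "(-t) *\<^sub>R ((-1/t) *\<^sub>R x - y) = x + t *\<^sub>R y"
      using less by (simp add: algebra_simps)
    finally show ?thesis using less by (simp add: algebra_simps)
  qed
  ultimately show ?thesis by simp
next
  case equal
  then show ?thesis using dominated_graphD(5)[OF G xa] by simp
next
  case greater
  have "c \<le> norm ((1/t) *\<^sub>R x + y) - (1/t) * a"
    using upper[OF dominated_graphD(4)[OF G xa]] .
  then have "t * c \<le> t * (norm ((1/t) *\<^sub>R x + y) - (1/t) * a)"
    using greater by (simp add: mult_left_mono)
  also have "\<dots> = norm (t *\<^sub>R ((1/t) *\<^sub>R x + y)) - a"
    using greater by (simp add: right_diff_distrib)
  also have "t *\<^sub>R ((1/t) *\<^sub>R x + y) = x + t *\<^sub>R y"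
    using greater by (simp add: algebra_simps)
  finally show ?thesis by simp
qed

lemma dominated_graph_decomp_unique:
  fixes y :: "'x::real_normed_vector"
  assumes G: "dominated_graph x0 G" and y: "y \<notin> fst ` G"
    and xz: "(x, a) \<in> G" "(z, b) \<in> G" "x + t *\<^sub>R y = z + s *\<^sub>R y"
  shows "t = s \<and> x = z"
proof (rule ccontr)
  assume "\<not> (t = s \<and> x = z)"
  with xz(3) have ts: "t \<noteq> s" by auto
  have "(t - s) *\<^sub>R y = z - x" using xz(3) by (simp add: algebra_simps)
  moreover have "y = (1 / (t - s)) *\<^sub>R ((t - s) *\<^sub>R y)" using ts by simp
  ultimately have "y = (1 / (t - s)) *\<^sub>R (z - x)" by simp
  moreover have "(z - x, b - a) \<in> G"
    using dominated_graphD(3)[OF G xz(2) dominated_graphD(4)[OF G xz(1), of "-1"]] by simp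
  ultimately have "(y, (1 / (t - s)) * (b - a)) \<in> G" using dominated_graphD(4)[OF G] by metis
  then show False using y by force
qed

lemma dominated_graph_extension:
  fixes y :: "'x::real_normed_vector"
  assumes G: "dominated_graph x0 G" and y: "y \<notin> fst ` G"
    and lower: "\<And>x a. (x, a) \<in> G \<Longrightarrow> a - norm (x - y) \<le> c"
    and upper: "\<And>z b. (z, b) \<in> G \<Longrightarrow> c \<le> norm (z + y) - b"
  shows "dominated_graph x0 {(x + t *\<^sub>R y, a + t * c) | x a t. (x, a) \<in> G}"
    (is "dominated_graph x0 ?G'")
  unfolding dominated_graph_def
proof (intro conjI allI impI)
  fix x a b assume "(x, a) \<in> ?G'" "(x, b) \<in> ?G'"
  then obtain x1 a1 t1 x2 a2 t2 where h: "(x1, a1) \<in> G" "(x2, a2) \<in> G" "x = x1 + t1 *\<^sub>R y"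
    "a = a1 + t1 * c" "x = x2 + t2 *\<^sub>R y" "b = a2 + t2 * c" by blast
  then show "a = b"
    using dominated_graph_decomp_unique[OF G y h(1,2), of t1 t2] dominated_graphD(1)[OF G] by auto
next
  show "(x0, norm x0) \<in> ?G'" using dominated_graphD(2)[OF G] by force
next
  fix x a z b assume "(x, a) \<in> ?G'" "(z, b) \<in> ?G'"
  then obtain x1 a1 t1 x2 a2 t2 where h: "(x1, a1) \<in> G" "(x2, a2) \<in> G" "x = x1 + t1 *\<^sub>R y"
    "a = a1 + t1 * c" "z = x2 + t2 *\<^sub>R y" "b = a2 + t2 * c" by blast
  have "x + z = (x1 + x2) + (t1 + t2) *\<^sub>R y" "a + b = (a1 + a2) + (t1 + t2) * c"
    using h by (auto simp: algebra_simps)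
  with dominated_graphD(3)[OF G h(1,2)] show "(x + z, a + b) \<in> ?G'" by blast
next
  fix x a r assume "(x, a) \<in> ?G'"
  then obtain x1 a1 t where h: "(x1, a1) \<in> G" "x = x1 + t *\<^sub>R y" "a = a1 + t * c" by blast
  have "r *\<^sub>R x = r *\<^sub>R x1 + (r * t) *\<^sub>R y" "r * a = r * a1 + (r * t) * c"
    using h by (auto simp: algebra_simps)
  with dominated_graphD(4)[OF G h(1)] show "(r *\<^sub>R x, r * a) \<in> ?G'" by blast
next
  fix x a assume "(x, a) \<in> ?G'"
  then obtain x1 a1 t where "(x1, a1) \<in> G" "x = x1 + t *\<^sub>R y" "a = a1 + t * c" by blast
  then show "a \<le> norm x" using dominated_graph_extension_bound[OF G _ lower upper] by blast
qed

lemma dominated_graph_extend: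
  fixes y :: "'x::real_normed_vector"
  assumes G: "dominated_graph x0 G" and y: "y \<notin> fst ` G"
  shows "\<exists>G'. dominated_graph x0 G' \<and> G \<subset> G'"
proof -
  obtain c where lower: "\<And>x a. (x, a) \<in> G \<Longrightarrow> a - norm (x - y) \<le> c"
    and upper: "\<And>z b. (z, b) \<in> G \<Longrightarrow> c \<le> norm (z + y) - b"
    using dominated_graph_extension_value[OF G] by blast
  let ?G' = "{(x + t *\<^sub>R y, a + t * c) | x a t. (x, a) \<in> G}"
  have "G \<subseteq> ?G'" by force
  moreover have "(y, c) \<in> ?G' - G" using dominated_graph_zero[OF G] y by force
  ultimately show ?thesis using dominated_graph_extension[OF G y lower upper] by blast
qed

lemma dominated_graph_chain_Union:
  assumes C: "C \<in> chains {G. dominated_graph x0 G}" and "C \<noteq> {}"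
  shows "dominated_graph x0 (\<Union>C)"
proof -
  have dom: "dominated_graph x0 X" if "X \<in> C" for X
    using chainsD2[OF C] that by blast
  have common: "\<exists>X\<in>C. p \<in> X \<and> q \<in> X" if pq: "p \<in> \<Union>C" "q \<in> \<Union>C" for p q
  proof -
    obtain X Y where "X \<in> C" "p \<in> X" "Y \<in> C" "q \<in> Y" using pq by blast
    then show ?thesis using chainsD[OF C \<open>X \<in> C\<close> \<open>Y \<in> C\<close>] by blast
  qed
  show ?thesis
    unfolding dominated_graph_def
  proof (intro conjI allI impI)
    fix x a b assume "(x, a) \<in> \<Union>C" "(x, b) \<in> \<Union>C"
    then obtain X where "X \<in> C" "(x, a) \<in> X" "(x, b) \<in> X" using common by blast
    then show "a = b" using dom dominated_graphD(1) by blast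
  next
    show "(x0, norm x0) \<in> \<Union>C" using \<open>C \<noteq> {}\<close> dom dominated_graphD(2) by blast
  next
    fix x a y b assume "(x, a) \<in> \<Union>C" "(y, b) \<in> \<Union>C"
    then obtain X where "X \<in> C" "(x, a) \<in> X" "(y, b) \<in> X" using common by blast
    then show "(x + y, a + b) \<in> \<Union>C" using dom dominated_graphD(3) by blast
  next
    fix x a c assume "(x, a) \<in> \<Union>C"
    then obtain X where "X \<in> C" "(x, a) \<in> X" by blast
    then show "(c *\<^sub>R x, c * a) \<in> \<Union>C" using dom dominated_graphD(4) by blast
  next
    fix x a assume "(x, a) \<in> \<Union>C"
    then obtain X where "X \<in> C" "(x, a) \<in> X" by blast
    then show "a \<le> norm x" using dom dominated_graphD(5) by blast
  qed
qed

lemma dominated_graph_line: "dominated_graph x0 {(t *\<^sub>R x0, t * norm x0) | t. True}"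
  (is "dominated_graph x0 ?L")
  unfolding dominated_graph_def
proof (intro conjI allI impI)
  fix x a b assume "(x, a) \<in> ?L" "(x, b) \<in> ?L"
  then obtain t s where "x = t *\<^sub>R x0" "a = t * norm x0" "x = s *\<^sub>R x0" "b = s * norm x0" by blast
  then show "a = b" by (cases "x0 = 0") auto
next
  fix x a y b assume "(x, a) \<in> ?L" "(y, b) \<in> ?L"
  then obtain t s where "x = t *\<^sub>R x0" "a = t * norm x0" "y = s *\<^sub>R x0" "b = s * norm x0" by blast
  then show "(x + y, a + b) \<in> ?L"
    by (intro CollectI exI[of _ "t + s"]) (simp add: algebra_simps)
next
  fix x a c assume "(x, a) \<in> ?L"
  then obtain t where "x = t *\<^sub>R x0" "a = t * norm x0" by blast
  then show "(c *\<^sub>R x, c * a) \<in> ?L"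
    by (intro CollectI exI[of _ "c * t"]) simp
next
  fix x a assume "(x, a) \<in> ?L"
  then obtain t where "x = t *\<^sub>R x0" "a = t * norm x0" by blast
  then show "a \<le> norm x" by (simp add: mult_right_mono)
qed (auto intro: exI[of _ 1])

lemma norming_functional:
  fixes x0 :: "'x::real_normed_vector"
  obtains f where "linear f" "f x0 = norm x0" "\<And>x. \<bar>f x\<bar> \<le> norm x"
proof -
  have "\<exists>U\<in>{G. dominated_graph x0 G}. \<forall>X\<in>C. X \<subseteq> U"
    if "C \<in> chains {G. dominated_graph x0 G}" for C
  proof (cases "C = {}")
    case True
    then show ?thesis using dominated_graph_line by blast
  next
    case False
    then show ?thesis using dominated_graph_chain_Union[OF that] by blast
  qed
  from Zorn_Lemma2[OF ballI[OF this]] obtain G where G: "dominated_graph x0 G"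
    and max: "\<And>G'. dominated_graph x0 G' \<Longrightarrow> G \<subseteq> G' \<Longrightarrow> G' = G"
    by blast
  have total: "\<exists>a. (x, a) \<in> G" for x
    using dominated_graph_extend[OF G, of x] max by force
  define f where "f x = (THE a. (x, a) \<in> G)" for x
  have f: "(x, a) \<in> G \<Longrightarrow> f x = a" for x a
    unfolding f_def using dominated_graphD(1)[OF G] by blast
  have fG: "(x, f x) \<in> G" for x
    using total f by blast
  have "linear f"
  proof (rule linearI)
    fix x z show "f (x + z) = f x + f z" using f[OF dominated_graphD(3)[OF G fG fG]] .
  next
    fix r x show "f (r *\<^sub>R x) = r *\<^sub>R f x" using f[OF dominated_graphD(4)[OF G fG]] by simp
  qed
  moreover have "\<bar>f x\<bar> \<le> norm x" for x
    using dominated_graphD(5)[OF G fG, of x] dominated_graphD(5)[OF G fG, of "-x"]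
      linear_neg[OF \<open>linear f\<close>, of x] by simp
  ultimately show thesis using that f[OF dominated_graphD(2)[OF G]] by blast
qed

lemma unit_norming_functional:
  assumes "\<exists>x::'x. x \<noteq> 0"
  obtains x1 :: "'x::real_normed_vector" and \<phi> where "norm x1 = 1" "linear \<phi>" "\<phi> x1 = 1" "\<And>x. \<bar>\<phi> x\<bar> \<le> norm x"
proof -
  obtain x0 :: 'x where "x0 \<noteq> 0" using assms by blast
  then have x1: "norm (sgn x0) = 1" by (simp add: norm_sgn)
  obtain \<phi> where \<phi>: "linear \<phi>" "\<phi> (sgn x0) = norm (sgn x0)" "\<And>x. \<bar>\<phi> x\<bar> \<le> norm x"
    using norming_functional[of "sgn x0"] by blast
  have "\<phi> (sgn x0) = 1" using \<phi>(2) x1 by simp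
  from that[OF x1 \<phi>(1) this \<phi>(3)] show thesis .
qed

section \<open>Closed linear spans in a dual space\<close>

definition lincomb :: "(real \<times> ('f \<Rightarrow> real)) list \<Rightarrow> 'f \<Rightarrow> real" where
  "lincomb L f = (\<Sum>p\<leftarrow>L. fst p * snd p f)"

lemma lincomb_Nil [simp]: "lincomb [] f = 0"
  by (simp add: lincomb_def)

lemma lincomb_Cons [simp]: "lincomb (p # L) f = fst p * snd p f + lincomb L f"
  by (simp add: lincomb_def)

lemma lincomb_append [simp]: "lincomb (L1 @ L2) f = lincomb L1 f + lincomb L2 f"
  by (simp add: lincomb_def)

lemma lincomb_scale: "lincomb (map (\<lambda>p. (a * fst p, snd p)) L) f = a * lincomb L f"
  by (induct L) (auto simp: algebra_simps)

lemma dual_closed_span_iff_lincomb: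
  "\<phi> \<in> dual_closed_span W U S \<longleftrightarrow> (\<forall>f. f \<notin> W \<longrightarrow> \<phi> f = 0) \<and>
     (\<forall>\<epsilon>>0. \<exists>L. snd ` set L \<subseteq> S \<and> (\<forall>f\<in>U. \<bar>\<phi> f - lincomb L f\<bar> \<le> \<epsilon>))"
proof -
  have "(\<exists>(n::nat) c s. (\<forall>i<n. s i \<in> S) \<and> (\<forall>f\<in>U. \<bar>\<phi> f - (\<Sum>i<n. c i * s i f)\<bar> \<le> \<epsilon>))
      \<longleftrightarrow> (\<exists>L. snd ` set L \<subseteq> S \<and> (\<forall>f\<in>U. \<bar>\<phi> f - lincomb L f\<bar> \<le> \<epsilon>))" for \<epsilon>
  proof
    assume "\<exists>(n::nat) c s. (\<forall>i<n. s i \<in> S) \<and> (\<forall>f\<in>U. \<bar>\<phi> f - (\<Sum>i<n. c i * s i f)\<bar> \<le> \<epsilon>)"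
    then obtain n :: nat and c s where "\<forall>i<n. s i \<in> S" "\<forall>f\<in>U. \<bar>\<phi> f - (\<Sum>i<n. c i * s i f)\<bar> \<le> \<epsilon>"
      by blast
    moreover have "lincomb (map (\<lambda>i. (c i, s i)) [0..<n]) f = (\<Sum>i<n. c i * s i f)" for f
      unfolding lincomb_def by (simp add: o_def sum_list_sum_nth atLeast0LessThan)
    ultimately show "\<exists>L. snd ` set L \<subseteq> S \<and> (\<forall>f\<in>U. \<bar>\<phi> f - lincomb L f\<bar> \<le> \<epsilon>)"
      by (intro exI[of _ "map (\<lambda>i. (c i, s i)) [0..<n]"]) auto
  next
    assume "\<exists>L. snd ` set L \<subseteq> S \<and> (\<forall>f\<in>U. \<bar>\<phi> f - lincomb L f\<bar> \<le> \<epsilon>)"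
    then obtain L where L: "snd ` set L \<subseteq> S" "\<forall>f\<in>U. \<bar>\<phi> f - lincomb L f\<bar> \<le> \<epsilon>" by blast
    have "lincomb L f = (\<Sum>i<length L. fst (L!i) * snd (L!i) f)" for f
      unfolding lincomb_def by (simp add: sum_list_sum_nth atLeast0LessThan)
    moreover have "\<forall>i<length L. snd (L!i) \<in> S" using L(1) nth_mem by fastforce
    ultimately show "\<exists>(n::nat) c s. (\<forall>i<n. s i \<in> S) \<and> (\<forall>f\<in>U. \<bar>\<phi> f - (\<Sum>i<n. c i * s i f)\<bar> \<le> \<epsilon>)"
      using L(2) by (intro exI[of _ "length L"] exI[of _ "\<lambda>i. fst (L!i)"] exI[of _ "\<lambda>i. snd (L!i)"]) auto
  qed
  then show ?thesis unfolding dual_closed_span_def by auto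
qed

lemma dual_closed_span_zero: "(\<lambda>_. 0) \<in> dual_closed_span W U S"
  unfolding dual_closed_span_iff_lincomb by (intro conjI allI impI exI[of _ "[]"]) auto

lemma dual_closed_span_generator:
  "s \<in> S \<Longrightarrow> (\<And>f. f \<notin> W \<Longrightarrow> s f = 0) \<Longrightarrow> s \<in> dual_closed_span W U S"
  unfolding dual_closed_span_iff_lincomb by (intro conjI allI impI exI[of _ "[(1, s)]"]) auto

lemma dual_closed_span_lin_comb:
  assumes "\<phi> \<in> dual_closed_span W U S" "\<psi> \<in> dual_closed_span W U S"
  shows "(\<lambda>t. a * \<phi> t + b * \<psi> t) \<in> dual_closed_span W U S"
  unfolding dual_closed_span_iff_lincomb
proof (intro conjI allI impI)
  fix f assume "f \<notin> W"
  then show "a * \<phi> f + b * \<psi> f = 0" using assms unfolding dual_closed_span_iff_lincomb by simp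
next
  fix \<epsilon> :: real assume "\<epsilon> > 0"
  define e1 where "e1 = \<epsilon> / (2 * (\<bar>a\<bar> + 1))"
  define e2 where "e2 = \<epsilon> / (2 * (\<bar>b\<bar> + 1))"
  have e1: "e1 > 0" "\<bar>a\<bar> * e1 \<le> \<epsilon> / 2" and e2: "e2 > 0" "\<bar>b\<bar> * e2 \<le> \<epsilon> / 2"
    using \<open>\<epsilon> > 0\<close> unfolding e1_def e2_def by (auto simp: field_simps)
  obtain L1 where L1: "snd ` set L1 \<subseteq> S" "\<forall>f\<in>U. \<bar>\<phi> f - lincomb L1 f\<bar> \<le> e1"
    using assms(1) e1(1) unfolding dual_closed_span_iff_lincomb by blast
  obtain L2 where L2: "snd ` set L2 \<subseteq> S" "\<forall>f\<in>U. \<bar>\<psi> f - lincomb L2 f\<bar> \<le> e2"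
    using assms(2) e2(1) unfolding dual_closed_span_iff_lincomb by blast
  define L where "L = map (\<lambda>p. (a * fst p, snd p)) L1 @ map (\<lambda>p. (b * fst p, snd p)) L2"
  have "snd ` set L \<subseteq> S" using L1(1) L2(1) unfolding L_def by auto
  moreover have "\<bar>(a * \<phi> f + b * \<psi> f) - lincomb L f\<bar> \<le> \<epsilon>" if "f \<in> U" for f
  proof -
    have "\<bar>(a * \<phi> f + b * \<psi> f) - lincomb L f\<bar>
        = \<bar>a * (\<phi> f - lincomb L1 f) + b * (\<psi> f - lincomb L2 f)\<bar>"
      unfolding L_def by (simp add: lincomb_scale algebra_simps)
    also have "\<dots> \<le> \<bar>a\<bar> * \<bar>\<phi> f - lincomb L1 f\<bar> + \<bar>b\<bar> * \<bar>\<psi> f - lincomb L2 f\<bar>"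
      by (metis abs_mult abs_triangle_ineq)
    also have "\<dots> \<le> \<bar>a\<bar> * e1 + \<bar>b\<bar> * e2"
      using L1(2) L2(2) that by (intro add_mono mult_left_mono) auto
    finally show ?thesis using e1 e2 by linarith
  qed
  ultimately show "\<exists>L. snd ` set L \<subseteq> S \<and> (\<forall>f\<in>U. \<bar>(a * \<phi> f + b * \<psi> f) - lincomb L f\<bar> \<le> \<epsilon>)"
    by blast
qed

lemma lincomb_bounded:
  assumes "\<And>s. s \<in> snd ` set L \<Longrightarrow> \<exists>C. \<forall>f\<in>U. \<bar>s f\<bar> \<le> C"
  shows "\<exists>C. \<forall>f\<in>U. \<bar>lincomb L f\<bar> \<le> C"
  using assms
proof (induct L)
  case Nil
  then show ?case by auto
next
  case (Cons p L)
  then obtain C1 where C1: "\<forall>f\<in>U. \<bar>lincomb L f\<bar> \<le> C1" by auto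
  obtain C2 where C2: "\<forall>f\<in>U. \<bar>snd p f\<bar> \<le> C2" using Cons.prems by auto
  have "\<bar>lincomb (p # L) f\<bar> \<le> \<bar>fst p\<bar> * C2 + C1" if "f \<in> U" for f
  proof -
    have "\<bar>lincomb (p # L) f\<bar> \<le> \<bar>fst p\<bar> * \<bar>snd p f\<bar> + \<bar>lincomb L f\<bar>"
      using abs_triangle_ineq[of "fst p * snd p f" "lincomb L f"] by (simp add: abs_mult)
    also have "\<dots> \<le> \<bar>fst p\<bar> * C2 + C1" using C1 C2 that by (intro add_mono mult_left_mono) auto
    finally show ?thesis .
  qed
  then show ?case by blast
qed

lemma dual_closed_span_bounded:
  assumes "\<And>s. s \<in> S \<Longrightarrow> \<exists>C. \<forall>f\<in>U. \<bar>s f\<bar> \<le> C" and "\<phi> \<in> dual_closed_span W U S"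
  shows "\<exists>C. \<forall>f\<in>U. \<bar>\<phi> f\<bar> \<le> C"
proof -
  obtain L where L: "snd ` set L \<subseteq> S" "\<forall>f\<in>U. \<bar>\<phi> f - lincomb L f\<bar> \<le> 1"
    using assms(2) unfolding dual_closed_span_iff_lincomb by (meson zero_less_one)
  obtain C where "\<forall>f\<in>U. \<bar>lincomb L f\<bar> \<le> C" using lincomb_bounded[of L U] L(1) assms(1) by blast
  then have "\<forall>f\<in>U. \<bar>\<phi> f\<bar> \<le> 1 + C" using L(2) by force
  then show ?thesis by blast
qed

lemma dual_closed_span_relation:
  assumes rel: "\<And>s. s \<in> S \<Longrightarrow> s g3 = a * s g1 + b * s g2"
    and "g1 \<in> U" "g2 \<in> U" "g3 \<in> U" and \<phi>: "\<phi> \<in> dual_closed_span W U S"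
  shows "\<phi> g3 = a * \<phi> g1 + b * \<phi> g2"
proof -
  have "\<bar>\<phi> g3 - (a * \<phi> g1 + b * \<phi> g2)\<bar> \<le> 0 + \<epsilon>" if "\<epsilon> > 0" for \<epsilon>
  proof -
    define K where "K = 1 + \<bar>a\<bar> + \<bar>b\<bar>"
    have K: "K > 0" unfolding K_def by simp
    obtain L where L: "snd ` set L \<subseteq> S" "\<forall>f\<in>U. \<bar>\<phi> f - lincomb L f\<bar> \<le> \<epsilon> / K"
      using \<phi> \<open>\<epsilon> > 0\<close> K unfolding dual_closed_span_iff_lincomb by (meson divide_pos_pos)
    have "lincomb L g3 = a * lincomb L g1 + b * lincomb L g2"
      using L(1) by (induct L) (auto simp: rel distrib_left)
    then have "\<bar>\<phi> g3 - (a * \<phi> g1 + b * \<phi> g2)\<bar>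
        = \<bar>(\<phi> g3 - lincomb L g3) - a * (\<phi> g1 - lincomb L g1) - b * (\<phi> g2 - lincomb L g2)\<bar>"
      by (simp add: algebra_simps)
    also have "\<dots> \<le> \<bar>\<phi> g3 - lincomb L g3\<bar> + \<bar>a\<bar> * \<bar>\<phi> g1 - lincomb L g1\<bar> + \<bar>b\<bar> * \<bar>\<phi> g2 - lincomb L g2\<bar>"
      unfolding abs_mult[symmetric] by linarith
    also have "\<dots> \<le> \<epsilon> / K + \<bar>a\<bar> * (\<epsilon> / K) + \<bar>b\<bar> * (\<epsilon> / K)"
      using L(2) assms(2-4) by (intro add_mono mult_left_mono) auto
    also have "\<dots> = K * (\<epsilon> / K)" unfolding K_def by (simp add: algebra_simps add_divide_distrib)
    also have "\<dots> = \<epsilon>" using K by simp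
    finally show ?thesis by simp
  qed
  then have "\<bar>\<phi> g3 - (a * \<phi> g1 + b * \<phi> g2)\<bar> \<le> 0" by (rule field_le_epsilon)
  then show ?thesis by simp
qed

lemma abs_le_dual_norm:
  assumes "\<forall>f\<in>U. \<bar>\<phi> f\<bar> \<le> C" "f \<in> U"
  shows "\<bar>\<phi> f\<bar> \<le> dual_norm U \<phi>"
  unfolding dual_norm_def using assms by (intro cSUP_upper bdd_aboveI2[where M = C]) auto

lemma dual_norm_le:
  assumes "U \<noteq> {}" "\<And>f. f \<in> U \<Longrightarrow> \<bar>\<phi> f\<bar> \<le> C"
  shows "dual_norm U \<phi> \<le> C"
  unfolding dual_norm_def using assms by (intro cSUP_least) auto

lemma less_dual_norm_obtain:
  assumes "U \<noteq> {}" "\<forall>f\<in>U. \<bar>\<phi> f\<bar> \<le> C" "t < dual_norm U \<phi>"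
  obtains f where "f \<in> U" "t < \<bar>\<phi> f\<bar>"
proof -
  have "bdd_above ((\<lambda>f. \<bar>\<phi> f\<bar>) ` U)" using assms(2) by (intro bdd_aboveI2[where M = C]) blast
  with assms(1,3) show thesis using that unfolding dual_norm_def by (auto simp: less_cSUP_iff)
qed

lemma dual_norm_scale:
  assumes "U \<noteq> {}" "\<forall>f\<in>U. \<bar>\<phi> f\<bar> \<le> C"
  shows "dual_norm U (\<lambda>t. c * \<phi> t) = \<bar>c\<bar> * dual_norm U \<phi>"
proof (cases "c = 0")
  case True
  then show ?thesis using assms(1) by (simp add: dual_norm_def)
next
  case False
  have bound: "\<forall>f\<in>U. \<bar>c * \<phi> f\<bar> \<le> \<bar>c\<bar> * C"
    using assms(2) unfolding abs_mult by (auto intro: mult_left_mono)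
  show ?thesis
  proof (rule antisym)
    show "dual_norm U (\<lambda>t. c * \<phi> t) \<le> \<bar>c\<bar> * dual_norm U \<phi>"
      using abs_le_dual_norm[OF assms(2)] assms(1)
      by (intro dual_norm_le) (auto simp: abs_mult intro: mult_left_mono)
    have "\<bar>\<phi> f\<bar> \<le> dual_norm U (\<lambda>t. c * \<phi> t) / \<bar>c\<bar>" if "f \<in> U" for f
      using abs_le_dual_norm[OF bound that] False by (simp add: abs_mult le_divide_eq mult.commute)
    then have "dual_norm U \<phi> \<le> dual_norm U (\<lambda>t. c * \<phi> t) / \<bar>c\<bar>"
      using assms(1) by (intro dual_norm_le) auto
    then show "\<bar>c\<bar> * dual_norm U \<phi> \<le> dual_norm U (\<lambda>t. c * \<phi> t)"
      using False by (simp add: le_divide_eq mult.commute)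
  qed
qed

section \<open>The Lipschitz-free space\<close>

lemma FreeSp_eq: "FreeSp M p0 = dual_closed_span (Lip0 M p0) (Lip0_ball M p0) (evalF M p0 ` M)"
  unfolding FreeSp_def by (simp add: setcompr_eq_image)

lemma Lip0_ball_zero: "(\<lambda>_. 0) \<in> Lip0_ball M p0"
  unfolding Lip0_ball_def Lip0_def by (auto simp: lipschitz_on_def)

lemma Lip0_ball_nonempty: "Lip0_ball M p0 \<noteq> {}"
  using Lip0_ball_zero by blast

lemma Lip0_ballD:
  assumes "g \<in> Lip0_ball M p0"
  shows "g \<in> Lip0 M p0" "g p0 = 0" "lipschitz_on 1 M g"
  using assms unfolding Lip0_ball_def Lip0_def by auto

lemma Lip0_ball_dist:
  assumes "g \<in> Lip0_ball M p0" "p \<in> M" "q \<in> M"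
  shows "\<bar>g p - g q\<bar> \<le> dist p q"
  using lipschitz_onD[OF Lip0_ballD(3)[OF assms(1)] assms(2,3)] by (simp add: dist_real_def)

lemma evalF_Lip0 [simp]: "g \<in> Lip0 M p0 \<Longrightarrow> evalF M p0 p g = g p"
  unfolding evalF_def by simp

lemma evalF_Lip0_ball [simp]: "g \<in> Lip0_ball M p0 \<Longrightarrow> evalF M p0 p g = g p"
  by (rule evalF_Lip0[OF Lip0_ballD(1)])

lemma evalF_in_FreeSp: "evalF M p0 p \<in> FreeSp M p0"
proof (cases "p \<in> M")
  case True
  then show ?thesis
    unfolding FreeSp_eq by (intro dual_closed_span_generator imageI) (simp_all add: evalF_def)
next
  case False
  then have "evalF M p0 p = (\<lambda>_. 0)" unfolding evalF_def Lip0_def by (intro ext) auto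
  then show ?thesis unfolding FreeSp_def by (simp add: dual_closed_span_zero)
qed

lemma FreeSp_lin_comb:
  "e \<in> FreeSp M p0 \<Longrightarrow> e' \<in> FreeSp M p0 \<Longrightarrow> (\<lambda>t. a * e t + b * e' t) \<in> FreeSp M p0"
  unfolding FreeSp_def by (rule dual_closed_span_lin_comb)

lemma FreeSp_diff:
  "e \<in> FreeSp M p0 \<Longrightarrow> e' \<in> FreeSp M p0 \<Longrightarrow> (\<lambda>t. e t - e' t) \<in> FreeSp M p0"
  using FreeSp_lin_comb[of e M p0 e' 1 "-1"] by simp

lemma lincomb_in_FreeSp:
  "snd ` set L \<subseteq> evalF M p0 ` M \<Longrightarrow> lincomb L \<in> FreeSp M p0"
proof (induct L)
  case Nil
  then show ?case using dual_closed_span_zero unfolding FreeSp_def lincomb_def by simp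
next
  case (Cons p L)
  then have "(\<lambda>t. fst p * snd p t + 1 * lincomb L t) \<in> FreeSp M p0"
    by (intro FreeSp_lin_comb) (auto intro: evalF_in_FreeSp)
  then show ?case by simp
qed

lemma FreeSp_bounded:
  assumes "p0 \<in> M" "e \<in> FreeSp M p0"
  shows "\<exists>C. \<forall>g\<in>Lip0_ball M p0. \<bar>e g\<bar> \<le> C"
proof (rule dual_closed_span_bounded[OF _ assms(2)[unfolded FreeSp_eq]])
  fix s assume "s \<in> evalF M p0 ` M"
  then obtain p where "p \<in> M" "s = evalF M p0 p" by blast
  then have "\<forall>g\<in>Lip0_ball M p0. \<bar>s g\<bar> \<le> dist p p0"
    using Lip0_ball_dist[OF _ _ assms(1)] Lip0_ballD(2) by fastforce
  then show "\<exists>C. \<forall>g\<in>Lip0_ball M p0. \<bar>s g\<bar> \<le> C" by blast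
qed

lemma FreeSp_relation:
  assumes "e \<in> FreeSp M p0" "g1 \<in> Lip0_ball M p0" "g2 \<in> Lip0_ball M p0" "g3 \<in> Lip0_ball M p0"
    and g3: "g3 = (\<lambda>t. a * g1 t + b * g2 t)"
  shows "e g3 = a * e g1 + b * e g2"
proof -
  have "s g3 = a * s g1 + b * s g2" if "s \<in> evalF M p0 ` M" for s
  proof -
    from that obtain p where "s = evalF M p0 p" by blast
    then have "s g1 = g1 p" "s g2 = g2 p" "s g3 = g3 p" using assms(2-4) by simp_all
    then show ?thesis using g3 by simp
  qed
  from dual_closed_span_relation[OF this assms(2-4)] assms(1) show ?thesis
    unfolding FreeSp_eq by blast
qed

lemma abs_le_FreeNorm:
  assumes "p0 \<in> M" "e \<in> FreeSp M p0" "g \<in> Lip0_ball M p0"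
  shows "\<bar>e g\<bar> \<le> FreeNorm M p0 e"
proof -
  obtain C where "\<forall>g\<in>Lip0_ball M p0. \<bar>e g\<bar> \<le> C" using FreeSp_bounded[OF assms(1,2)] by blast
  then show ?thesis unfolding FreeNorm_def using assms(3) by (rule abs_le_dual_norm)
qed

lemma FreeNorm_nonneg: "p0 \<in> M \<Longrightarrow> e \<in> FreeSp M p0 \<Longrightarrow> 0 \<le> FreeNorm M p0 e"
  using abs_le_FreeNorm[OF _ _ Lip0_ball_zero] abs_ge_zero order_trans by blast

lemma FreeNorm_evalF_diff:
  assumes "u \<in> M" "c \<in> M"
  shows "FreeNorm M p0 (\<lambda>t. evalF M p0 u t - evalF M p0 c t) \<le> dist u c"
  unfolding FreeNorm_def using Lip0_ball_dist[OF _ assms]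
  by (intro dual_norm_le[OF Lip0_ball_nonempty]) simp

lemma FreeNorm_evalF_base: "FreeNorm M p0 (evalF M p0 p0) \<le> 0"
  unfolding FreeNorm_def
  by (intro dual_norm_le[OF Lip0_ball_nonempty]) (simp add: Lip0_ballD(2))

section \<open>Bilinear forms on the free space\<close>

lemma bilinear_ballD:
  assumes "B \<in> bilinear_ball E nE"
  shows "B \<in> bounded_bilinear_forms E nE"
    and "e \<in> E \<Longrightarrow> linear (B e)"
    and "e \<in> E \<Longrightarrow> e' \<in> E \<Longrightarrow> B (\<lambda>t. a * e t + b * e' t) x = a * B e x + b * B e' x"
    and "e \<in> E \<Longrightarrow> \<bar>B e x\<bar> \<le> nE e * norm x"
    and "e \<notin> E \<Longrightarrow> B e x = 0"
  using assms unfolding bilinear_ball_def bounded_bilinear_forms_def by blast+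

lemma bilinear_ballI:
  assumes "\<And>e x. e \<notin> E \<Longrightarrow> B e x = 0" "\<And>e. e \<in> E \<Longrightarrow> linear (B e)"
    and "\<And>e e' a b x. e \<in> E \<Longrightarrow> e' \<in> E \<Longrightarrow> B (\<lambda>t. a * e t + b * e' t) x = a * B e x + b * B e' x"
    and "\<And>e x. e \<in> E \<Longrightarrow> \<bar>B e x\<bar> \<le> nE e * norm x"
  shows "B \<in> bilinear_ball E nE"
  unfolding bilinear_ball_def bounded_bilinear_forms_def using assms by (auto intro!: exI[of _ 1])

lemma bilinear_ball_diff:
  "B \<in> bilinear_ball E nE \<Longrightarrow> e \<in> E \<Longrightarrow> e' \<in> E \<Longrightarrow> B (\<lambda>t. e t - e' t) x = B e x - B e' x"
  using bilinear_ballD(3)[of B E nE e e' 1 "-1" x] by simp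

lemma bilinear_ball_zero:
  "(\<And>e. e \<in> E \<Longrightarrow> 0 \<le> nE e) \<Longrightarrow> (\<lambda>e x. 0) \<in> bilinear_ball E nE"
  unfolding bilinear_ball_def bounded_bilinear_forms_def
  by (auto intro!: exI[of _ 0] simp: linear_iff)

lemma bilinear_ball_uminus:
  assumes "B \<in> bilinear_ball E nE"
  shows "(\<lambda>e x. - B e x) \<in> bilinear_ball E nE"
proof (rule bilinear_ballI)
  show "linear (\<lambda>x. - B e x)" if "e \<in> E" for e
    using bilinear_ballD(2)[OF assms that] unfolding linear_iff by simp
qed (use bilinear_ballD(3-5)[OF assms] in \<open>simp_all add: algebra_simps\<close>)

lemma bilinear_ball_FreeSp_nonempty:
  "p0 \<in> M \<Longrightarrow> bilinear_ball (FreeSp M p0) (FreeNorm M p0) \<noteq> {}"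
  using bilinear_ball_zero FreeNorm_nonneg by blast

lemma bilinear_ball_evalF_base:
  assumes "B \<in> bilinear_ball (FreeSp M p0) (FreeNorm M p0)"
  shows "B (evalF M p0 p0) x = 0"
proof -
  have "\<bar>B (evalF M p0 p0) x\<bar> \<le> FreeNorm M p0 (evalF M p0 p0) * norm x"
    by (rule bilinear_ballD(4)[OF assms evalF_in_FreeSp])
  also have "\<dots> \<le> 0" using FreeNorm_evalF_base[of M p0] by (simp add: mult_nonpos_nonneg)
  finally show ?thesis by simp
qed

lemma bilinear_ball_evalF_dist:
  assumes B: "B \<in> bilinear_ball (FreeSp M p0) (FreeNorm M p0)" and "m \<in> M" "m' \<in> M"
  shows "\<bar>B (evalF M p0 m) x - B (evalF M p0 m') x\<bar> \<le> norm x * dist m m'"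
proof -
  have "\<bar>B (evalF M p0 m) x - B (evalF M p0 m') x\<bar> = \<bar>B (\<lambda>t. evalF M p0 m t - evalF M p0 m' t) x\<bar>"
    using bilinear_ball_diff[OF B evalF_in_FreeSp evalF_in_FreeSp] by simp
  also have "\<dots> \<le> FreeNorm M p0 (\<lambda>t. evalF M p0 m t - evalF M p0 m' t) * norm x"
    by (rule bilinear_ballD(4)[OF B FreeSp_diff[OF evalF_in_FreeSp evalF_in_FreeSp]])
  also have "\<dots> \<le> dist m m' * norm x"
    by (rule mult_right_mono[OF FreeNorm_evalF_diff[OF assms(2,3)]]) simp
  finally show ?thesis by (simp add: mult.commute)
qed

lemma bilinear_ball_lincomb:
  assumes B: "B \<in> bilinear_ball (FreeSp M p0) (FreeNorm M p0)"
  shows "snd ` set L \<subseteq> evalF M p0 ` M \<Longrightarrow> B (lincomb L) x = (\<Sum>q\<leftarrow>L. fst q * B (snd q) x)"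
proof (induct L)
  case Nil
  have "lincomb [] = (\<lambda>t. 0 * evalF M p0 p0 t + 0 * evalF M p0 p0 t)"
    by (simp add: fun_eq_iff)
  then show ?case
    using bilinear_ballD(3)[OF B evalF_in_FreeSp[of M p0 p0] evalF_in_FreeSp[of M p0 p0], where a=0 and b=0]
    by simp
next
  case (Cons p L)
  have "snd p \<in> FreeSp M p0" using Cons.prems evalF_in_FreeSp by auto
  moreover have "lincomb L \<in> FreeSp M p0" using Cons.prems lincomb_in_FreeSp by auto
  moreover have "lincomb (p # L) = (\<lambda>t. fst p * snd p t + 1 * lincomb L t)"
    by (simp add: fun_eq_iff)
  ultimately show ?case
    using Cons bilinear_ballD(3)[OF B, where e="snd p" and e'="lincomb L" and a="fst p" and b=1]
    by simp
qed

lemma bilinear_ball_free_approx: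
  assumes e: "e \<in> FreeSp M p0" and "\<eta> > 0"
  obtains L where "snd ` set L \<subseteq> evalF M p0 ` M"
    and "\<And>B x. B \<in> bilinear_ball (FreeSp M p0) (FreeNorm M p0) \<Longrightarrow>
           \<bar>B e x - (\<Sum>q\<leftarrow>L. fst q * B (snd q) x)\<bar> \<le> \<eta> * norm x"
proof -
  obtain L where L: "snd ` set L \<subseteq> evalF M p0 ` M" "\<forall>g\<in>Lip0_ball M p0. \<bar>e g - lincomb L g\<bar> \<le> \<eta>"
    using assms unfolding FreeSp_eq dual_closed_span_iff_lincomb by blast
  have diff: "(\<lambda>t. e t - lincomb L t) \<in> FreeSp M p0"
    by (rule FreeSp_diff[OF e lincomb_in_FreeSp[OF L(1)]])
  have norm_diff: "FreeNorm M p0 (\<lambda>t. e t - lincomb L t) \<le> \<eta>"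
    unfolding FreeNorm_def using L(2) by (intro dual_norm_le[OF Lip0_ball_nonempty]) simp
  have "\<bar>B e x - (\<Sum>q\<leftarrow>L. fst q * B (snd q) x)\<bar> \<le> \<eta> * norm x"
    if B: "B \<in> bilinear_ball (FreeSp M p0) (FreeNorm M p0)" for B x
  proof -
    have "B e x - (\<Sum>q\<leftarrow>L. fst q * B (snd q) x) = B (\<lambda>t. e t - lincomb L t) x"
      using bilinear_ball_diff[OF B e lincomb_in_FreeSp[OF L(1)]] bilinear_ball_lincomb[OF B L(1)]
      by simp
    also have "\<bar>\<dots>\<bar> \<le> FreeNorm M p0 (\<lambda>t. e t - lincomb L t) * norm x"
      by (rule bilinear_ballD(4)[OF B diff])
    also have "\<dots> \<le> \<eta> * norm x" by (rule mult_right_mono[OF norm_diff]) simp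
    finally show ?thesis .
  qed
  with L(1) show thesis by (rule that)
qed

lemma FreeSp_apply_sgn_scale:
  fixes G :: "'x::real_normed_vector \<Rightarrow> 'a::metric_space \<Rightarrow> real"
  assumes lin: "\<And>m. linear (\<lambda>x. G x m)"
    and unit: "\<And>x. norm x = 1 \<Longrightarrow> G x \<in> Lip0_ball M p0"
    and e: "e \<in> FreeSp M p0" and "x \<noteq> 0" "r \<noteq> 0"
  shows "e (G (sgn (r *\<^sub>R x))) = sgn r * e (G (sgn x))"
proof -
  have eq: "G (sgn (r *\<^sub>R x)) = (\<lambda>m. sgn r * G (sgn x) m + 0 * G (sgn x) m)"
    using linear_scale[OF lin] by (simp add: sgn_scaleR fun_eq_iff)
  have "G (sgn x) \<in> Lip0_ball M p0" "G (sgn (r *\<^sub>R x)) \<in> Lip0_ball M p0"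
    using unit assms(4,5) by (simp_all add: norm_sgn)
  from FreeSp_relation[OF e this(1) this(1) this(2) eq] show ?thesis by simp
qed

lemma FreeSp_apply_sgn_add:
  fixes G :: "'x::real_normed_vector \<Rightarrow> 'a::metric_space \<Rightarrow> real"
  assumes lin: "\<And>m. linear (\<lambda>x. G x m)"
    and unit: "\<And>x. norm x = 1 \<Longrightarrow> G x \<in> Lip0_ball M p0"
    and e: "e \<in> FreeSp M p0" and nz: "x \<noteq> 0" "y \<noteq> 0" "x + y \<noteq> 0"
  shows "norm (x + y) * e (G (sgn (x + y))) = norm x * e (G (sgn x)) + norm y * e (G (sgn y))"
proof -
  define a b where "a = norm x / norm (x + y)" and "b = norm y / norm (x + y)"
  have "sgn (x + y) = a *\<^sub>R sgn x + b *\<^sub>R sgn y"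
    using nz unfolding a_def b_def by (simp add: sgn_div_norm scaleR_add_right inverse_eq_divide)
  then have "G (sgn (x + y)) = (\<lambda>m. a * G (sgn x) m + b * G (sgn y) m)"
    using linear_add[OF lin] linear_scale[OF lin] by (simp add: fun_eq_iff)
  moreover have "G (sgn x) \<in> Lip0_ball M p0" "G (sgn y) \<in> Lip0_ball M p0"
    "G (sgn (x + y)) \<in> Lip0_ball M p0"
    using unit nz by (simp_all add: norm_sgn)
  ultimately have "e (G (sgn (x + y))) = a * e (G (sgn x)) + b * e (G (sgn y))"
    using FreeSp_relation[OF e] by simp
  then show ?thesis using nz(3) unfolding a_def b_def by (simp add: field_simps)
qed

text \<open>Elements of F(M) are only known to act linearly on the unit ball of Lip0(M), so a family
  of Lipschitz functions depending linearly on x is fed to them in normalised form.\<close>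

lemma FreeSp_apply_Lip0_family_linear:
  fixes G :: "'x::real_normed_vector \<Rightarrow> 'a::metric_space \<Rightarrow> real"
  assumes lin: "\<And>m. linear (\<lambda>x. G x m)"
    and unit: "\<And>x. norm x = 1 \<Longrightarrow> G x \<in> Lip0_ball M p0"
    and e: "e \<in> FreeSp M p0"
  shows "linear (\<lambda>x. norm x * e (G (sgn x)))"
proof (rule linearI)
  fix x y :: 'x
  have neg: "e (G (sgn (- z))) = - e (G (sgn z))" if "z \<noteq> 0" for z
    using FreeSp_apply_sgn_scale[OF lin unit e that, of "-1"] by simp
  consider "x = 0 \<or> y = 0" | "x \<noteq> 0" "x + y = 0" | "x \<noteq> 0" "y \<noteq> 0" "x + y \<noteq> 0" by blast
  then show "norm (x + y) * e (G (sgn (x + y))) = norm x * e (G (sgn x)) + norm y * e (G (sgn y))"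
  proof cases
    case 2
    then have "y = - x" by (simp add: add_eq_0_iff2)
    then show ?thesis using 2 neg by simp
  qed (auto intro: FreeSp_apply_sgn_add[OF lin unit e])
next
  fix r x
  show "norm (r *\<^sub>R x) * e (G (sgn (r *\<^sub>R x))) = r *\<^sub>R (norm x * e (G (sgn x)))"
  proof (cases "r = 0 \<or> x = 0")
    case False
    then have "norm (r *\<^sub>R x) * e (G (sgn (r *\<^sub>R x))) = (\<bar>r\<bar> * sgn r) * (norm x * e (G (sgn x)))"
      using FreeSp_apply_sgn_scale[OF lin unit e] by (simp add: ac_simps)
    then show ?thesis by (simp add: abs_mult_sgn)
  qed auto
qed

lemma bilinear_ball_of_Lip0_family:
  fixes G :: "'x::real_normed_vector \<Rightarrow> 'a::metric_space \<Rightarrow> real"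
  assumes p0: "p0 \<in> M" and lin: "\<And>m. linear (\<lambda>x. G x m)"
    and unit: "\<And>x. norm x = 1 \<Longrightarrow> G x \<in> Lip0_ball M p0"
  obtains B where "B \<in> bilinear_ball (FreeSp M p0) (FreeNorm M p0)"
    and "\<And>p x. p \<in> M \<Longrightarrow> B (evalF M p0 p) x = G x p"
proof -
  define B where "B e x = (if e \<in> FreeSp M p0 then norm x * e (G (sgn x)) else 0)" for e x
  have B_in: "B e x = norm x * e (G (sgn x))" if "e \<in> FreeSp M p0" for e x
    using that unfolding B_def by simp
  have bound: "\<bar>B e x\<bar> \<le> FreeNorm M p0 e * norm x" if "e \<in> FreeSp M p0" for e x
  proof (cases "x = 0")
    case False
    then have "\<bar>e (G (sgn x))\<bar> \<le> FreeNorm M p0 e"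
      using abs_le_FreeNorm[OF p0 that unit] by (simp add: norm_sgn)
    then have "norm x * \<bar>e (G (sgn x))\<bar> \<le> norm x * FreeNorm M p0 e" by (rule mult_left_mono) simp
    then show ?thesis using B_in[OF that] by (simp add: abs_mult mult.commute)
  qed (simp add: B_in[OF that])
  have "B \<in> bilinear_ball (FreeSp M p0) (FreeNorm M p0)"
  proof (rule bilinear_ballI)
    show "B e x = 0" if "e \<notin> FreeSp M p0" for e x using that unfolding B_def by simp
    show "linear (B e)" if e: "e \<in> FreeSp M p0" for e
    proof -
      have "B e = (\<lambda>x. norm x * e (G (sgn x)))" using B_in[OF e] by (simp add: fun_eq_iff)
      then show ?thesis using FreeSp_apply_Lip0_family_linear[OF lin unit e] by simp
    qed
    show "B (\<lambda>t. a * e t + b * e' t) x = a * B e x + b * B e' x"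
      if "e \<in> FreeSp M p0" "e' \<in> FreeSp M p0" for e e' a b x
      using that B_in FreeSp_lin_comb[of e M p0 e' a b] by (simp add: algebra_simps)
  qed (rule bound)
  moreover have "B (evalF M p0 p) x = G x p" if "p \<in> M" for p x
  proof (cases "x = 0")
    case True
    then show ?thesis using B_in[OF evalF_in_FreeSp] linear_0[OF lin] by simp
  next
    case False
    then have "B (evalF M p0 p) x = norm x * G (sgn x) p"
      using B_in[OF evalF_in_FreeSp] unit by (simp add: norm_sgn)
    also have "\<dots> = G (norm x *\<^sub>R sgn x) p"
      using linear_scale[OF lin, of "norm x" "sgn x"] by simp
    also have "norm x *\<^sub>R sgn x = x" by (simp add: sgn_div_norm False)
    finally show ?thesis .
  qed
  ultimately show thesis by (rule that)
qed

section \<open>Projective tensors\<close>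

definition etensor ::
  "('f \<Rightarrow> real) set \<Rightarrow> (('f \<Rightarrow> real) \<Rightarrow> real) \<Rightarrow> ('f \<Rightarrow> real) \<Rightarrow> 'x::real_normed_vector \<Rightarrow>
   ((('f \<Rightarrow> real) \<Rightarrow> 'x \<Rightarrow> real) \<Rightarrow> real)" where
  "etensor E nE e x = (\<lambda>B. if B \<in> bounded_bilinear_forms E nE then B e x else 0)"

lemma proj_tensor_eq:
  "proj_tensor E nE = dual_closed_span (bounded_bilinear_forms E nE) (bilinear_ball E nE)
       {etensor E nE e x | e x. e \<in> E}"
  unfolding proj_tensor_def etensor_def by simp

lemma etensor_apply:
  assumes "B \<in> bilinear_ball E nE"
  shows "etensor E nE e x B = B e x"
  unfolding etensor_def using bilinear_ballD(1)[OF assms] by simp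

lemma etensor_in_proj_tensor: "e \<in> E \<Longrightarrow> etensor E nE e x \<in> proj_tensor E nE"
  unfolding proj_tensor_eq by (rule dual_closed_span_generator) (auto simp: etensor_def)

lemma proj_tensor_lin_comb:
  "z \<in> proj_tensor E nE \<Longrightarrow> w \<in> proj_tensor E nE \<Longrightarrow> (\<lambda>t. a * z t + b * w t) \<in> proj_tensor E nE"
  unfolding proj_tensor_def by (rule dual_closed_span_lin_comb)

lemma proj_tensor_bounded:
  assumes "z \<in> proj_tensor E nE"
  shows "\<exists>C. \<forall>B\<in>bilinear_ball E nE. \<bar>z B\<bar> \<le> C"
proof (rule dual_closed_span_bounded[OF _ assms[unfolded proj_tensor_eq]])
  fix s assume "s \<in> {etensor E nE e x | e x. e \<in> E}"
  then obtain e x where "e \<in> E" "s = etensor E nE e x" by blast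
  then have "\<forall>B\<in>bilinear_ball E nE. \<bar>s B\<bar> \<le> nE e * norm x"
    using bilinear_ballD(4) etensor_apply by metis
  then show "\<exists>C. \<forall>B\<in>bilinear_ball E nE. \<bar>s B\<bar> \<le> C" by blast
qed

lemma abs_le_proj_tensor_norm:
  assumes "z \<in> proj_tensor E nE" "B \<in> bilinear_ball E nE"
  shows "\<bar>z B\<bar> \<le> proj_tensor_norm E nE z"
proof -
  obtain C where "\<forall>B\<in>bilinear_ball E nE. \<bar>z B\<bar> \<le> C" using proj_tensor_bounded[OF assms(1)] by blast
  then show ?thesis unfolding proj_tensor_norm_def using assms(2) by (rule abs_le_dual_norm)
qed

lemma bilinear_ball_evalF_approx:
  fixes x :: "'x::real_normed_vector"
  assumes e: "e \<in> FreeSp M p0" and "\<eta> > 0"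
  obtains L where "fst ` set L \<subseteq> evalF M p0 ` M"
    and "\<And>B. B \<in> bilinear_ball (FreeSp M p0) (FreeNorm M p0) \<Longrightarrow>
           \<bar>B e x - (\<Sum>q\<leftarrow>L. B (fst q) (snd q))\<bar> \<le> \<eta>"
proof -
  define \<eta>' where "\<eta>' = \<eta> / (norm x + 1)"
  have pos: "norm x + 1 > 0" by (simp add: add_nonneg_pos)
  then have "\<eta>' > 0" unfolding \<eta>'_def using \<open>\<eta> > 0\<close> by (rule divide_pos_pos[rotated])
  have "\<eta>' * norm x \<le> \<eta>' * (norm x + 1)" using \<open>\<eta>' > 0\<close> by simp
  also have "\<dots> = \<eta>" unfolding \<eta>'_def using pos by simp
  finally have small: "\<eta>' * norm x \<le> \<eta>" .
  obtain L0 where L0: "snd ` set L0 \<subseteq> evalF M p0 ` M"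
    and approx: "\<And>B (x::'x). B \<in> bilinear_ball (FreeSp M p0) (FreeNorm M p0) \<Longrightarrow>
           \<bar>B e x - (\<Sum>q\<leftarrow>L0. fst q * B (snd q) x)\<bar> \<le> \<eta>' * norm x"
    using bilinear_ball_free_approx[OF e \<open>\<eta>' > 0\<close>] by blast
  define L where "L = map (\<lambda>q. (snd q, fst q *\<^sub>R x)) L0"
  have "fst ` set L \<subseteq> evalF M p0 ` M" using L0 unfolding L_def by auto
  moreover have "\<bar>B e x - (\<Sum>q\<leftarrow>L. B (fst q) (snd q))\<bar> \<le> \<eta>"
    if B: "B \<in> bilinear_ball (FreeSp M p0) (FreeNorm M p0)" for B
  proof -
    have "B (snd q) (fst q *\<^sub>R x) = fst q * B (snd q) x" if "q \<in> set L0" for q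
    proof -
      from that L0 obtain p where "snd q = evalF M p0 p" by blast
      then show ?thesis using linear_scale[OF bilinear_ballD(2)[OF B evalF_in_FreeSp]] by simp
    qed
    then have "(\<Sum>q\<leftarrow>L. B (fst q) (snd q)) = (\<Sum>q\<leftarrow>L0. fst q * B (snd q) x)"
      unfolding L_def by (simp add: o_def cong: map_cong)
    then show ?thesis using approx[OF B, of x] small by linarith
  qed
  ultimately show thesis by (rule that)
qed

lemma lincomb_etensor_approx_evalF:
  fixes L1 :: "(real \<times> (((('a::metric_space \<Rightarrow> real) \<Rightarrow> real) \<Rightarrow> 'x::real_normed_vector \<Rightarrow> real) \<Rightarrow> real)) list"
  assumes "snd ` set L1 \<subseteq> {etensor (FreeSp M p0) (FreeNorm M p0) e x | e x. e \<in> FreeSp M p0}"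
    and "\<eta> > 0"
  shows "\<exists>L. fst ` set L \<subseteq> evalF M p0 ` M \<and>
    (\<forall>B\<in>bilinear_ball (FreeSp M p0) (FreeNorm M p0). \<bar>lincomb L1 B - (\<Sum>q\<leftarrow>L. B (fst q) (snd q))\<bar> \<le> \<eta>)"
  using assms
proof (induct L1 arbitrary: \<eta>)
  case Nil
  then show ?case by (intro exI[of _ "[]"]) simp
next
  case (Cons p L1)
  obtain L' where L': "fst ` set L' \<subseteq> evalF M p0 ` M"
    "\<forall>B\<in>bilinear_ball (FreeSp M p0) (FreeNorm M p0). \<bar>lincomb L1 B - (\<Sum>q\<leftarrow>L'. B (fst q) (snd q))\<bar> \<le> \<eta> / 2"
    using Cons.hyps[of "\<eta> / 2"] Cons.prems by auto
  obtain e x where e: "e \<in> FreeSp M p0" and p: "snd p = etensor (FreeSp M p0) (FreeNorm M p0) e x"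
    using Cons.prems by auto
  have "\<eta> / 2 > 0" using Cons.prems(2) by simp
  obtain L0 where L0: "fst ` set L0 \<subseteq> evalF M p0 ` M"
    "\<And>B. B \<in> bilinear_ball (FreeSp M p0) (FreeNorm M p0) \<Longrightarrow> \<bar>B e (fst p *\<^sub>R x) - (\<Sum>q\<leftarrow>L0. B (fst q) (snd q))\<bar> \<le> \<eta> / 2"
    using bilinear_ball_evalF_approx[OF e \<open>\<eta> / 2 > 0\<close>, where x = "fst p *\<^sub>R x"] by blast
  have "\<bar>lincomb (p # L1) B - (\<Sum>q\<leftarrow>L0 @ L'. B (fst q) (snd q))\<bar> \<le> \<eta>" if B: "B \<in> bilinear_ball (FreeSp M p0) (FreeNorm M p0)" for B
  proof -
    have "fst p * snd p B = B e (fst p *\<^sub>R x)"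
      using p etensor_apply[OF B] linear_scale[OF bilinear_ballD(2)[OF B e]] by simp
    then have "lincomb (p # L1) B - (\<Sum>q\<leftarrow>L0 @ L'. B (fst q) (snd q))
        = (B e (fst p *\<^sub>R x) - (\<Sum>q\<leftarrow>L0. B (fst q) (snd q)))
          + (lincomb L1 B - (\<Sum>q\<leftarrow>L'. B (fst q) (snd q)))"
      by simp
    then show ?thesis
      using L0(2)[OF B] L'(2)[rule_format, OF B] abs_triangle_ineq[of
          "B e (fst p *\<^sub>R x) - (\<Sum>q\<leftarrow>L0. B (fst q) (snd q))"
          "lincomb L1 B - (\<Sum>q\<leftarrow>L'. B (fst q) (snd q))"]
      by linarith
  qed
  moreover have "fst ` set (L0 @ L') \<subseteq> evalF M p0 ` M" using L0(1) L'(1) by auto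
  ultimately show ?case by blast
qed

lemma proj_tensor_approx_evalF:
  assumes z: "z \<in> proj_tensor (FreeSp M p0) (FreeNorm M p0)" and "\<eta> > 0"
  obtains L where "fst ` set L \<subseteq> evalF M p0 ` M"
    and "\<And>B. B \<in> bilinear_ball (FreeSp M p0) (FreeNorm M p0) \<Longrightarrow>
           \<bar>z B - (\<Sum>q\<leftarrow>L. B (fst q) (snd q))\<bar> \<le> \<eta>"
proof -
  let ?Ball = "bilinear_ball (FreeSp M p0) (FreeNorm M p0) :: ((('a \<Rightarrow> real) \<Rightarrow> real) \<Rightarrow> 'b \<Rightarrow> real) set"
  obtain L1 where L1: "snd ` set L1 \<subseteq> {etensor (FreeSp M p0) (FreeNorm M p0) e x | e x. e \<in> FreeSp M p0}"
    "\<forall>B\<in>?Ball. \<bar>z B - lincomb L1 B\<bar> \<le> \<eta> / 2"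
    using z \<open>\<eta> > 0\<close> unfolding proj_tensor_eq dual_closed_span_iff_lincomb by (meson half_gt_zero)
  obtain L where L: "fst ` set L \<subseteq> evalF M p0 ` M"
    "\<forall>B\<in>?Ball. \<bar>lincomb L1 B - (\<Sum>q\<leftarrow>L. B (fst q) (snd q))\<bar> \<le> \<eta> / 2"
    using lincomb_etensor_approx_evalF[OF L1(1)] \<open>\<eta> > 0\<close> by (meson half_gt_zero)
  have "\<bar>z B - (\<Sum>q\<leftarrow>L. B (fst q) (snd q))\<bar> \<le> \<eta>" if "B \<in> ?Ball" for B
    using L1(2)[rule_format, OF that] L(2)[rule_format, OF that] by linarith
  with L(1) show thesis by (rule that)
qed

lemma proj_tensor_norming_form:
  fixes z :: "(('f \<Rightarrow> real) \<Rightarrow> 'x::real_normed_vector \<Rightarrow> real) \<Rightarrow> real"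
  assumes "bilinear_ball E nE \<noteq> ({} :: (('f \<Rightarrow> real) \<Rightarrow> 'x \<Rightarrow> real) set)" and z: "z \<in> proj_tensor E nE" "proj_tensor_norm E nE z = 1"
    and approx: "\<And>B. B \<in> bilinear_ball E nE \<Longrightarrow> \<bar>z B - (\<Sum>q\<leftarrow>L. B (fst q) (snd q))\<bar> \<le> \<delta>"
    and "\<delta> > 0"
  obtains B where "B \<in> bilinear_ball E nE" "1 - 2 * \<delta> \<le> (\<Sum>q\<leftarrow>L. B (fst q) (snd q))"
proof -
  obtain C where "\<forall>B\<in>bilinear_ball E nE. \<bar>z B\<bar> \<le> C" using proj_tensor_bounded[OF z(1)] by blast
  moreover have "1 - \<delta> < dual_norm (bilinear_ball E nE) z"
    using z(2) \<open>\<delta> > 0\<close> unfolding proj_tensor_norm_def by simp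
  ultimately obtain B0 where B0: "B0 \<in> bilinear_ball E nE" "1 - \<delta> < \<bar>z B0\<bar>"
    by (rule less_dual_norm_obtain[OF assms(1)])
  show thesis
  proof (cases "0 \<le> (\<Sum>q\<leftarrow>L. B0 (fst q) (snd q))")
    case True
    then show thesis using B0 approx[OF B0(1)] by (intro that[OF B0(1)]) linarith
  next
    case False
    have "(\<Sum>q\<leftarrow>L. - B0 (fst q) (snd q)) = - (\<Sum>q\<leftarrow>L. B0 (fst q) (snd q))"
      by (induct L) simp_all
    then show thesis
      using False B0 approx[OF B0(1)] by (intro that[OF bilinear_ball_uminus[OF B0(1)]]) linarith
  qed
qed

lemma proj_tensor_norming_on_points:
  fixes z :: "((('a::metric_space \<Rightarrow> real) \<Rightarrow> real) \<Rightarrow> 'x::real_normed_vector \<Rightarrow> real) \<Rightarrow> real"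
  assumes p0: "p0 \<in> M" and z: "z \<in> proj_tensor (FreeSp M p0) (FreeNorm M p0)"
    and z_norm: "proj_tensor_norm (FreeSp M p0) (FreeNorm M p0) z = 1" and "\<delta> > 0" "\<theta> > 0"
  obtains Q B where "finite Q" "Q \<subseteq> M" "B \<in> bilinear_ball (FreeSp M p0) (FreeNorm M p0)"
    and "\<And>B'. B' \<in> bilinear_ball (FreeSp M p0) (FreeNorm M p0) \<Longrightarrow>
           \<forall>q\<in>Q. \<forall>x. B' (evalF M p0 q) x = B (evalF M p0 q) x / \<theta> \<Longrightarrow> (1 - 2 * \<delta>) / \<theta> - \<delta> \<le> z B'"
proof -
  let ?Ball = "bilinear_ball (FreeSp M p0) (FreeNorm M p0) :: ((('a \<Rightarrow> real) \<Rightarrow> real) \<Rightarrow> 'x \<Rightarrow> real) set"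
  obtain L where L: "fst ` set L \<subseteq> evalF M p0 ` M"
    and approx: "\<And>B. B \<in> ?Ball \<Longrightarrow> \<bar>z B - (\<Sum>q\<leftarrow>L. B (fst q) (snd q))\<bar> \<le> \<delta>"
    using proj_tensor_approx_evalF[OF z \<open>\<delta> > 0\<close>] by blast
  obtain Q where Q: "Q \<subseteq> M" "finite Q" "fst ` set L = evalF M p0 ` Q"
    using finite_subset_image[OF _ L] by blast
  obtain B where B: "B \<in> ?Ball" "1 - 2 * \<delta> \<le> (\<Sum>q\<leftarrow>L. B (fst q) (snd q))"
    by (rule proj_tensor_norming_form[OF bilinear_ball_FreeSp_nonempty[OF p0] z z_norm approx \<open>\<delta> > 0\<close>])
  show thesis
  proof (rule that[OF Q(2,1) B(1)])
    fix B' assume B': "B' \<in> ?Ball" and scaled: "\<forall>q\<in>Q. \<forall>x. B' (evalF M p0 q) x = B (evalF M p0 q) x / \<theta>"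
    have "(\<Sum>q\<leftarrow>L. B' (fst q) (snd q)) = (\<Sum>q\<leftarrow>L. (1 / \<theta>) * B (fst q) (snd q))"
    proof (intro arg_cong[where f = sum_list] map_cong refl)
      fix q assume "q \<in> set L"
      then obtain p where "p \<in> Q" "fst q = evalF M p0 p" using Q(3) by (metis imageE image_eqI)
      then show "B' (fst q) (snd q) = (1 / \<theta>) * B (fst q) (snd q)" using scaled by simp
    qed
    also have "\<dots> = (1 / \<theta>) * (\<Sum>q\<leftarrow>L. B (fst q) (snd q))" by (rule sum_list_const_mult)
    finally have "(1 - 2 * \<delta>) / \<theta> \<le> (\<Sum>q\<leftarrow>L. B' (fst q) (snd q))"
      using B(2) \<open>\<theta> > 0\<close> by (simp add: divide_right_mono)
    then show "(1 - 2 * \<delta>) / \<theta> - \<delta> \<le> z B'" using approx[OF B'] by linarith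
  qed
qed

section \<open>Separating cut-off functions\<close>

text \<open>The cut-off vanishes up to radius s and equals 1 from radius s e^(1/\<kappa>) on; growing
  logarithmically in between makes it (\<kappa>/r)-Lipschitz at radius r.\<close>

definition log_cutoff :: "real \<Rightarrow> real \<Rightarrow> real \<Rightarrow> real" where
  "log_cutoff s \<kappa> r = max 0 (min 1 (\<kappa> * ln (max s r / s)))"

lemma log_cutoff_bounds: "0 \<le> log_cutoff s \<kappa> r" "log_cutoff s \<kappa> r \<le> 1"
  unfolding log_cutoff_def by auto

lemma log_cutoff_eq_0: "0 < s \<Longrightarrow> r \<le> s \<Longrightarrow> log_cutoff s \<kappa> r = 0"
  unfolding log_cutoff_def by (simp add: max_absorb1)

lemma log_cutoff_eq_1:
  assumes "0 < s" "0 < \<kappa>" "s * exp (1 / \<kappa>) \<le> r"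
  shows "log_cutoff s \<kappa> r = 1"
proof -
  have "s \<le> s * exp (1 / \<kappa>)" using assms(1,2) by simp
  then have sr: "s \<le> r" using assms(3) by linarith
  have "exp (1 / \<kappa>) \<le> r / s" using assms(1,3) by (simp add: le_divide_eq mult.commute)
  then have "1 / \<kappa> \<le> ln (r / s)"
    using assms(1) sr by (subst ln_ge_iff) (auto intro: divide_pos_pos)
  then have "1 \<le> \<kappa> * ln (r / s)" using assms(2) by (simp add: divide_le_eq mult.commute)
  then show ?thesis unfolding log_cutoff_def using sr by (simp add: max_absorb2)
qed

lemma log_cutoff_weighted_lipschitz_le:
  assumes s: "0 < s" and k: "0 \<le> \<kappa>" and r: "0 \<le> r" "r \<le> r'"
  shows "\<bar>log_cutoff s \<kappa> r - log_cutoff s \<kappa> r'\<bar> * r \<le> \<kappa> * (r' - r)"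
proof -
  define A where "A = max s r"
  define A' where "A' = max s r'"
  have A: "0 < A" "r \<le> A" "A \<le> A'" "A' - A \<le> r' - r"
    using s r unfolding A_def A'_def by (auto simp: max_def)
  have "\<bar>log_cutoff s \<kappa> r - log_cutoff s \<kappa> r'\<bar> \<le> \<bar>\<kappa> * ln (A / s) - \<kappa> * ln (A' / s)\<bar>"
    unfolding log_cutoff_def A_def A'_def by (auto simp: max_def min_def abs_if)
  also have "\<dots> = \<kappa> * ln (A' / A)"
    using A s k by (simp add: ln_div abs_mult right_diff_distrib[symmetric] abs_minus_commute)
  finally have h: "\<bar>log_cutoff s \<kappa> r - log_cutoff s \<kappa> r'\<bar> \<le> \<kappa> * ln (A' / A)" .
  have "ln (A' / A) * r \<le> (A' / A - 1) * A"
    using A r by (intro mult_mono ln_le_minus_one) (auto simp: divide_le_eq_1)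
  also have "\<dots> = A' - A" using A by (simp add: field_simps)
  finally have "ln (A' / A) * r \<le> r' - r" using A by linarith
  have "\<bar>log_cutoff s \<kappa> r - log_cutoff s \<kappa> r'\<bar> * r \<le> \<kappa> * ln (A' / A) * r"
    using mult_right_mono[OF h r(1)] .
  also have "\<dots> = \<kappa> * (ln (A' / A) * r)" by simp
  also have "\<dots> \<le> \<kappa> * (r' - r)" by (rule mult_left_mono[OF \<open>ln (A' / A) * r \<le> r' - r\<close> k])
  finally show ?thesis .
qed

lemma log_cutoff_dist_weighted_lipschitz:
  fixes m m' c :: "'a::metric_space"
  assumes "0 < s" "0 \<le> \<kappa>"
  shows "\<bar>log_cutoff s \<kappa> (dist m c) - log_cutoff s \<kappa> (dist m' c)\<bar> * min (dist m c) (dist m' c)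
           \<le> \<kappa> * dist m m'"
proof -
  have "\<bar>log_cutoff s \<kappa> (dist m c) - log_cutoff s \<kappa> (dist m' c)\<bar> * min (dist m c) (dist m' c)
      \<le> \<kappa> * \<bar>dist m c - dist m' c\<bar>"
  proof (cases "dist m c \<le> dist m' c")
    case True
    then show ?thesis
      using log_cutoff_weighted_lipschitz_le[OF assms zero_le_dist True] by (simp add: min_absorb1)
  next
    case False
    then show ?thesis
      using log_cutoff_weighted_lipschitz_le[OF assms zero_le_dist, of m' c "dist m c"]
      by (simp add: min_absorb2 abs_minus_commute)
  qed
  also have "\<dots> \<le> \<kappa> * dist m m'"
    using abs_dist_diff_le[of m c m'] assms(2) by (intro mult_left_mono) (auto simp: dist_commute)
  finally show ?thesis .
qed

text \<open>The weighted Lipschitz condition is what keeps the bent forms of bilinear_ball_perturb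
  within 1 + 2\<kappa> times the unit ball.\<close>

definition separating_cutoff :: "'a::metric_space set \<Rightarrow> real \<Rightarrow> 'a \<Rightarrow> 'a \<Rightarrow> ('a \<Rightarrow> real) \<Rightarrow> bool" where
  "separating_cutoff Q \<kappa> c u a \<longleftrightarrow> (\<forall>m. 0 \<le> a m \<and> a m \<le> 1) \<and>
     (\<forall>m m'. \<bar>a m - a m'\<bar> * min (dist m c) (dist m' c) \<le> \<kappa> * dist m m') \<and>
     a u = 1 \<and> (\<forall>q\<in>Q. q = c \<or> a q = 0)"

lemma separating_cutoff_far:
  fixes c u :: "'a::metric_space"
  assumes s: "0 < s" and k: "0 < \<kappa>" and "s * exp (1 / \<kappa>) \<le> dist u c"
    and Q: "\<And>q. q \<in> Q \<Longrightarrow> dist q c \<le> s"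
  shows "separating_cutoff Q \<kappa> c u (\<lambda>m. log_cutoff s \<kappa> (dist m c))"
  unfolding separating_cutoff_def
proof (intro conjI allI ballI)
  fix m m'
  show "\<bar>log_cutoff s \<kappa> (dist m c) - log_cutoff s \<kappa> (dist m' c)\<bar> * min (dist m c) (dist m' c)
      \<le> \<kappa> * dist m m'"
    by (rule log_cutoff_dist_weighted_lipschitz[OF s less_imp_le[OF k]])
next
  show "log_cutoff s \<kappa> (dist u c) = 1" by (rule log_cutoff_eq_1) fact+
next
  fix q assume "q \<in> Q"
  then show "q = c \<or> log_cutoff s \<kappa> (dist q c) = 0" using Q log_cutoff_eq_0[OF s] by simp
qed (simp_all add: log_cutoff_bounds)

lemma separating_cutoff_near:
  fixes c u :: "'a::metric_space"
  assumes k: "0 < \<kappa>" and "u \<noteq> c"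
    and Q: "\<And>q. q \<in> Q \<Longrightarrow> q \<noteq> c \<Longrightarrow> dist u c * exp (1 / \<kappa>) \<le> dist q c"
  shows "separating_cutoff Q \<kappa> c u (\<lambda>m. 1 - log_cutoff (dist u c) \<kappa> (dist m c))"
  unfolding separating_cutoff_def
proof (intro conjI allI ballI)
  have s: "0 < dist u c" using \<open>u \<noteq> c\<close> by simp
  fix m m'
  show "\<bar>(1 - log_cutoff (dist u c) \<kappa> (dist m c)) - (1 - log_cutoff (dist u c) \<kappa> (dist m' c))\<bar>
      * min (dist m c) (dist m' c) \<le> \<kappa> * dist m m'"
    using log_cutoff_dist_weighted_lipschitz[OF s, of \<kappa> m c m'] k by (simp add: abs_minus_commute)
next
  show "1 - log_cutoff (dist u c) \<kappa> (dist u c) = 1"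
    using \<open>u \<noteq> c\<close> log_cutoff_eq_0 by simp
next
  fix q assume q: "q \<in> Q"
  show "q = c \<or> 1 - log_cutoff (dist u c) \<kappa> (dist q c) = 0"
  proof (cases "q = c")
    case False
    have "log_cutoff (dist u c) \<kappa> (dist q c) = 1"
      by (rule log_cutoff_eq_1) (use \<open>u \<noteq> c\<close> k Q[OF q False] in auto)
    then show ?thesis by simp
  qed simp
qed (simp_all add: log_cutoff_bounds)

lemma finite_separated:
  fixes Q :: "'a::metric_space set"
  assumes "finite Q"
  obtains \<rho> where "\<rho> > 0" "\<And>q q'. q \<in> Q \<Longrightarrow> q' \<in> Q \<Longrightarrow> q \<noteq> q' \<Longrightarrow> \<rho> \<le> dist q q'"
proof -
  define D where "D = insert 1 {dist q q' | q q'. q \<in> Q \<and> q' \<in> Q \<and> q \<noteq> q'}"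
  have "D \<subseteq> insert 1 ((\<lambda>(q, q'). dist q q') ` (Q \<times> Q))" unfolding D_def by auto
  then have "finite D" using assms finite_subset by blast
  moreover have "\<forall>d\<in>D. d > 0" unfolding D_def by auto
  ultimately have "Min D > 0" unfolding D_def by simp
  moreover have "Min D \<le> dist q q'" if "q \<in> Q" "q' \<in> Q" "q \<noteq> q'" for q q'
    using \<open>finite D\<close> that unfolding D_def by (intro Min_le) auto
  ultimately show thesis by (rule that)
qed

lemma separating_cutoff_unbounded:
  fixes M Q :: "'a::metric_space set"
  assumes "\<not> bounded M" "finite Q" "0 < \<kappa>"
  obtains u a where "u \<in> M" "u \<noteq> c" "separating_cutoff Q \<kappa> c u a"
proof -
  define s where "s = Max (insert 0 ((\<lambda>q. dist q c) ` Q)) + 1"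
  have "0 \<le> Max (insert 0 ((\<lambda>q. dist q c) ` Q))" using assms(2) by simp
  then have s: "0 < s" unfolding s_def by linarith
  have Q: "dist q c \<le> s" if "q \<in> Q" for q
  proof -
    have "dist q c \<le> Max (insert 0 ((\<lambda>q. dist q c) ` Q))" using assms(2) that by (intro Max_ge) auto
    then show ?thesis unfolding s_def by simp
  qed
  obtain u where u: "u \<in> M" "s * exp (1 / \<kappa>) < dist c u"
    using assms(1) unfolding bounded_any_center[of M c] by (meson not_le)
  have "0 < s * exp (1 / \<kappa>)" using s by simp
  with u(2) have "u \<noteq> c" by auto
  moreover have "separating_cutoff Q \<kappa> c u (\<lambda>m. log_cutoff s \<kappa> (dist m c))"
    using separating_cutoff_far[OF s assms(3) _ Q] u(2) by (simp add: dist_commute)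
  ultimately show thesis using u(1) that by blast
qed

text \<open>Pick u, v much closer to each other than the points of Q are; then either v is far from
  Q (relative to d(u,v)) or a single point q of Q is close to v and far from the rest of Q.\<close>

lemma separating_cutoff_not_uniformly_discrete:
  fixes M Q :: "'a::metric_space set"
  assumes "\<not> uniformly_discrete M" "finite Q" "Q \<subseteq> M" "0 < \<kappa>"
  obtains c u a where "c \<in> M" "u \<in> M" "u \<noteq> c" "separating_cutoff Q \<kappa> c u a"
proof -
  obtain \<rho> where \<rho>: "\<rho> > 0" "\<And>q q'. q \<in> Q \<Longrightarrow> q' \<in> Q \<Longrightarrow> q \<noteq> q' \<Longrightarrow> \<rho> \<le> dist q q'"
    using finite_separated[OF assms(2)] by blast
  define K where "K = exp (1 / \<kappa>)"
  have K: "1 \<le> K" using assms(4) unfolding K_def by simp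
  have "\<rho> / (K * K) > 0" using \<rho>(1) K by simp
  then obtain u v where uv: "u \<in> M" "v \<in> M" "u \<noteq> v" "dist u v < \<rho> / (K * K)"
    using assms(1) unfolding uniformly_discrete_def by (meson not_le)
  have close: "dist u v * K * K < \<rho>" using uv(4) K by (simp add: pos_less_divide_eq mult.assoc)
  show thesis
  proof (cases "\<forall>q\<in>Q. q \<noteq> v \<longrightarrow> dist u v * K \<le> dist q v")
    case True
    then have "separating_cutoff Q \<kappa> v u (\<lambda>m. 1 - log_cutoff (dist u v) \<kappa> (dist m v))"
      using separating_cutoff_near[OF assms(4) uv(3)] unfolding K_def by blast
    then show thesis using uv that by blast
  next
    case False
    then obtain q where q: "q \<in> Q" "q \<noteq> v" "dist q v < dist u v * K" by (meson not_le)
    have "dist v q * K \<le> dist q' q" if "q' \<in> Q" "q' \<noteq> q" for q'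
    proof -
      have "dist v q * K \<le> dist u v * K * K" using q(3) K by (simp add: dist_commute)
      also have "\<dots> \<le> dist q' q" using close \<rho>(2)[OF that(1) q(1) that(2)] by simp
      finally show ?thesis .
    qed
    then have "separating_cutoff Q \<kappa> q v (\<lambda>m. 1 - log_cutoff (dist v q) \<kappa> (dist m q))"
      using separating_cutoff_near[OF assms(4) q(2)[symmetric]] unfolding K_def by blast
    then show thesis using uv q(1,2) assms(3) that by blast
  qed
qed

lemma exists_separating_cutoff:
  fixes M Q :: "'a::metric_space set"
  assumes "p0 \<in> M" "finite Q" "Q \<subseteq> M" "\<not> (bounded M \<and> uniformly_discrete M)" "0 < \<kappa>"
  obtains c u a where "c \<in> M" "u \<in> M" "u \<noteq> c" "separating_cutoff Q \<kappa> c u a"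
    and "p0 = c \<or> a p0 = 0"
proof -
  obtain c u a where "c \<in> M" "u \<in> M" "u \<noteq> c" "separating_cutoff (insert p0 Q) \<kappa> c u a"
  proof (cases "bounded M")
    case False
    moreover have "finite (insert p0 Q)" using assms(2) by simp
    ultimately obtain u a where "u \<in> M" "u \<noteq> p0" "separating_cutoff (insert p0 Q) \<kappa> p0 u a"
      using separating_cutoff_unbounded[OF _ _ assms(5)] by blast
    then show thesis using that assms(1) by blast
  next
    case True
    then have "\<not> uniformly_discrete M" using assms(4) by blast
    moreover have "finite (insert p0 Q)" "insert p0 Q \<subseteq> M" using assms(1-3) by auto
    ultimately show thesis
      using separating_cutoff_not_uniformly_discrete[OF _ _ _ assms(5)] that by blast
  qed
  then show thesis using that unfolding separating_cutoff_def by blast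
qed

section \<open>The octahedrality witness\<close>

lemma perturbation_lipschitz_bound:
  fixes gm gm' gc am am' dm dm' dmm' X \<phi>x \<kappa> :: real
  assumes "\<bar>gm - gm'\<bar> \<le> X * dmm'" "\<bar>gm' - gc\<bar> \<le> X * dm'"
    and "0 \<le> am" "am \<le> 1" "\<bar>\<phi>x\<bar> \<le> X"
    and "\<bar>dm - dm'\<bar> \<le> dmm'" "\<bar>am - am'\<bar> * dm' \<le> \<kappa> * dmm'"
    and "0 \<le> X" "0 \<le> dm'"
  shows "\<bar>(gm + am * (gc - dm * \<phi>x - gm)) - (gm' + am' * (gc - dm' * \<phi>x - gm'))\<bar>
           \<le> (1 + 2 * \<kappa>) * X * dmm'"
proof -
  define D where "D = gc - dm' * \<phi>x - gm'"
  have "\<bar>(1 - am) * (gm - gm')\<bar> \<le> (1 - am) * (X * dmm')"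
    using assms(1,4) by (simp add: abs_mult mult_left_mono)
  moreover have "\<bar>am * ((dm - dm') * \<phi>x)\<bar> \<le> am * (X * dmm')"
  proof -
    have "\<bar>(dm - dm') * \<phi>x\<bar> \<le> dmm' * X"
      unfolding abs_mult using assms(5,6) by (intro mult_mono) auto
    then show ?thesis using assms(3) by (simp add: abs_mult mult_left_mono mult.commute)
  qed
  moreover have "\<bar>(am - am') * D\<bar> \<le> 2 * X * (\<kappa> * dmm')"
  proof -
    have "\<bar>D\<bar> \<le> \<bar>gc - gm'\<bar> + \<bar>dm' * \<phi>x\<bar>" unfolding D_def by linarith
    also have "\<dots> \<le> X * dm' + dm' * X"
      using assms(2,5,9) by (intro add_mono) (auto simp: abs_minus_commute abs_mult mult_left_mono)
    finally have "\<bar>(am - am') * D\<bar> \<le> \<bar>am - am'\<bar> * (2 * X * dm')"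
      unfolding abs_mult by (intro mult_left_mono) auto
    also have "\<dots> = 2 * X * (\<bar>am - am'\<bar> * dm')" by simp
    also have "\<dots> \<le> 2 * X * (\<kappa> * dmm')" using assms(7,8) by (intro mult_left_mono) auto
    finally show ?thesis .
  qed
  moreover have "(gm + am * (gc - dm * \<phi>x - gm)) - (gm' + am' * (gc - dm' * \<phi>x - gm'))
      = (1 - am) * (gm - gm') - am * ((dm - dm') * \<phi>x) + (am - am') * D"
    unfolding D_def by (simp add: algebra_simps)
  ultimately show ?thesis by (simp add: algebra_simps)
qed

lemma bilinear_ball_bend_lipschitz:
  fixes B :: "(('a::metric_space \<Rightarrow> real) \<Rightarrow> real) \<Rightarrow> 'x::real_normed_vector \<Rightarrow> real"
  assumes B: "B \<in> bilinear_ball (FreeSp M p0) (FreeNorm M p0)" and c: "c \<in> M"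
    and \<phi>: "\<And>x. \<bar>\<phi> x\<bar> \<le> norm x" and a: "separating_cutoff Q \<kappa> c u a"
    and m: "m \<in> M" "m' \<in> M"
  shows "\<bar>(B (evalF M p0 m) x + a m * (B (evalF M p0 c) x - dist m c * \<phi> x - B (evalF M p0 m) x))
          - (B (evalF M p0 m') x + a m' * (B (evalF M p0 c) x - dist m' c * \<phi> x - B (evalF M p0 m') x))\<bar>
         \<le> (1 + 2 * \<kappa>) * norm x * dist m m'"
proof -
  define core where "core m = B (evalF M p0 m) x + a m * (B (evalF M p0 c) x - dist m c * \<phi> x - B (evalF M p0 m) x)"
    for m
  have ordered: "\<bar>core m - core m'\<bar> \<le> (1 + 2 * \<kappa>) * norm x * dist m m'"
    if "m \<in> M" "m' \<in> M" "dist m' c \<le> dist m c" for m m'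
    unfolding core_def
  proof (rule perturbation_lipschitz_bound)
    show "\<bar>a m - a m'\<bar> * dist m' c \<le> \<kappa> * dist m m'"
      using a that(3) unfolding separating_cutoff_def by (metis min_absorb2)
    show "\<bar>dist m c - dist m' c\<bar> \<le> dist m m'"
      using abs_dist_diff_le[of m c m'] by (simp add: dist_commute)
    show "\<bar>B (evalF M p0 m') x - B (evalF M p0 c) x\<bar> \<le> norm x * dist m' c"
      by (rule bilinear_ball_evalF_dist[OF B that(2) c])
  qed (use bilinear_ball_evalF_dist[OF B that(1,2)] a \<phi> in \<open>auto simp: separating_cutoff_def\<close>)
  show ?thesis
    using ordered[OF m] ordered[OF m(2,1)] unfolding core_def[symmetric]
    by (cases "dist m' c \<le> dist m c") (auto simp: abs_minus_commute dist_commute)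
qed

text \<open>Moving B towards the form (m, x) \<mapsto> B \<delta>_c x - d(m,c) \<phi> x on the support of the cut-off
  costs a factor 1 + 2\<kappa> in the norm.\<close>

lemma bilinear_ball_perturb:
  fixes B :: "(('a::metric_space \<Rightarrow> real) \<Rightarrow> real) \<Rightarrow> 'x::real_normed_vector \<Rightarrow> real"
  assumes p0: "p0 \<in> M" and B: "B \<in> bilinear_ball (FreeSp M p0) (FreeNorm M p0)" and c: "c \<in> M"
    and \<phi>: "linear \<phi>" "\<And>x. \<bar>\<phi> x\<bar> \<le> norm x"
    and a: "separating_cutoff Q \<kappa> c u a" "p0 = c \<or> a p0 = 0" and "0 \<le> \<kappa>"
  obtains B' where "B' \<in> bilinear_ball (FreeSp M p0) (FreeNorm M p0)"
    and "\<And>p x. p \<in> M \<Longrightarrow> B' (evalF M p0 p) x =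
       (B (evalF M p0 p) x + a p * (B (evalF M p0 c) x - dist p c * \<phi> x - B (evalF M p0 p) x)) / (1 + 2 * \<kappa>)"
proof -
  define core where "core x m = B (evalF M p0 m) x + a m * (B (evalF M p0 c) x - dist m c * \<phi> x - B (evalF M p0 m) x)"
    for x m
  define G where "G x m = (if m \<in> M then core x m / (1 + 2 * \<kappa>) else 0)" for x m
  have \<theta>: "1 + 2 * \<kappa> > 0" using \<open>0 \<le> \<kappa>\<close> by simp
  have "linear (\<lambda>x. core x m)" for m
    using bilinear_ballD(2)[OF B evalF_in_FreeSp] \<phi>(1) unfolding core_def linear_iff
    by (simp add: algebra_simps)
  then have lin: "linear (\<lambda>x. G x m)" for m
    unfolding G_def linear_iff by (simp add: add_divide_distrib)
  have unit: "G x \<in> Lip0_ball M p0" if "norm x = 1" for x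
  proof -
    have "lipschitz_on 1 M (G x)"
    proof (rule lipschitz_onI)
      fix m m' assume m: "m \<in> M" "m' \<in> M"
      have "\<bar>core x m / (1 + 2 * \<kappa>) - core x m' / (1 + 2 * \<kappa>)\<bar> = \<bar>core x m - core x m'\<bar> / (1 + 2 * \<kappa>)"
        using \<theta> by (simp add: diff_divide_distrib[symmetric])
      also have "\<dots> \<le> dist m m'"
        using bilinear_ball_bend_lipschitz[OF B c \<phi>(2) a(1) m, of x] that \<theta>
        unfolding core_def by (simp add: divide_le_eq mult.commute)
      finally show "dist (G x m) (G x m') \<le> 1 * dist m m'"
        unfolding G_def dist_real_def using m by simp
    qed simp
    moreover have "G x p0 = 0"
      using a(2) bilinear_ball_evalF_base[OF B] p0 unfolding G_def core_def by auto
    ultimately show ?thesis unfolding Lip0_ball_def Lip0_def G_def by auto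
  qed
  obtain B' where "B' \<in> bilinear_ball (FreeSp M p0) (FreeNorm M p0)"
    "\<And>p x. p \<in> M \<Longrightarrow> B' (evalF M p0 p) x = G x p"
    using bilinear_ball_of_Lip0_family[OF p0 lin unit] by blast
  then show thesis using that unfolding G_def core_def by simp
qed

lemma bilinear_ball_separate:
  fixes B :: "(('a::metric_space \<Rightarrow> real) \<Rightarrow> real) \<Rightarrow> 'x::real_normed_vector \<Rightarrow> real"
  assumes p0: "p0 \<in> M" and B: "B \<in> bilinear_ball (FreeSp M p0) (FreeNorm M p0)"
    and "c \<in> M" "u \<in> M" "Q \<subseteq> M"
    and \<phi>: "linear \<phi>" "\<And>x. \<bar>\<phi> x\<bar> \<le> norm x" "\<phi> x1 = 1"
    and a: "separating_cutoff Q \<kappa> c u a" "p0 = c \<or> a p0 = 0" and "0 \<le> \<kappa>"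
  obtains B' where "B' \<in> bilinear_ball (FreeSp M p0) (FreeNorm M p0)"
    and "\<And>q x. q \<in> Q \<Longrightarrow> B' (evalF M p0 q) x = B (evalF M p0 q) x / (1 + 2 * \<kappa>)"
    and "B' (evalF M p0 u) x1 - B' (evalF M p0 c) x1 = - dist u c / (1 + 2 * \<kappa>)"
proof -
  obtain B' where B': "B' \<in> bilinear_ball (FreeSp M p0) (FreeNorm M p0)"
    and B'_eq: "\<And>p x. p \<in> M \<Longrightarrow> B' (evalF M p0 p) x =
       (B (evalF M p0 p) x + a p * (B (evalF M p0 c) x - dist p c * \<phi> x - B (evalF M p0 p) x)) / (1 + 2 * \<kappa>)"
    using bilinear_ball_perturb[OF p0 B \<open>c \<in> M\<close> \<phi>(1,2) a \<open>0 \<le> \<kappa>\<close>] by blast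
  have "B' (evalF M p0 q) x = B (evalF M p0 q) x / (1 + 2 * \<kappa>)" if "q \<in> Q" for q x
  proof -
    have "q = c \<or> a q = 0" using a(1) that unfolding separating_cutoff_def by blast
    then show ?thesis using B'_eq[of q x] that \<open>Q \<subseteq> M\<close> by auto
  qed
  moreover have "B' (evalF M p0 u) x1 - B' (evalF M p0 c) x1 = - dist u c / (1 + 2 * \<kappa>)"
  proof -
    have "a u = 1" using a(1) unfolding separating_cutoff_def by blast
    then show ?thesis
      using B'_eq[OF \<open>u \<in> M\<close>, of x1] B'_eq[OF \<open>c \<in> M\<close>, of x1] \<phi>(3) by (simp add: diff_divide_distrib)
  qed
  ultimately show thesis using B' that by blast
qed

lemma proj_tensor_normalise:
  fixes z :: "(('f \<Rightarrow> real) \<Rightarrow> 'x::real_normed_vector \<Rightarrow> real) \<Rightarrow> real"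
  assumes "bilinear_ball E nE \<noteq> ({} :: (('f \<Rightarrow> real) \<Rightarrow> 'x \<Rightarrow> real) set)"
    and z: "z \<in> proj_tensor E nE" "proj_tensor_norm E nE z > 0"
  shows "(\<lambda>t. (1 / proj_tensor_norm E nE z) * z t) \<in> proj_tensor E nE"
    and "proj_tensor_norm E nE (\<lambda>t. (1 / proj_tensor_norm E nE z) * z t) = 1"
proof -
  show "(\<lambda>t. (1 / proj_tensor_norm E nE z) * z t) \<in> proj_tensor E nE"
    using proj_tensor_lin_comb[OF z(1) z(1), of "1 / proj_tensor_norm E nE z" 0] by simp
  obtain C where "\<forall>B\<in>bilinear_ball E nE. \<bar>z B\<bar> \<le> C" using proj_tensor_bounded[OF z(1)] by blast
  from dual_norm_scale[OF assms(1) this, of "1 / proj_tensor_norm E nE z"] z(2)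
  show "proj_tensor_norm E nE (\<lambda>t. (1 / proj_tensor_norm E nE z) * z t) = 1"
    unfolding proj_tensor_norm_def by simp
qed

lemma etensor_evalF_diff_apply:
  assumes B: "B \<in> bilinear_ball (FreeSp M p0) (FreeNorm M p0)" and "u \<in> M" "c \<in> M"
  shows "etensor (FreeSp M p0) (FreeNorm M p0) (\<lambda>t. evalF M p0 u t - evalF M p0 c t) x B
           = B (evalF M p0 u) x - B (evalF M p0 c) x"
    and "\<bar>etensor (FreeSp M p0) (FreeNorm M p0) (\<lambda>t. evalF M p0 u t - evalF M p0 c t) x B\<bar>
           \<le> dist u c * norm x"
proof -
  show "etensor (FreeSp M p0) (FreeNorm M p0) (\<lambda>t. evalF M p0 u t - evalF M p0 c t) x B
      = B (evalF M p0 u) x - B (evalF M p0 c) x"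
    unfolding etensor_apply[OF B] by (rule bilinear_ball_diff[OF B evalF_in_FreeSp evalF_in_FreeSp])
  have "\<bar>B (\<lambda>t. evalF M p0 u t - evalF M p0 c t) x\<bar>
      \<le> FreeNorm M p0 (\<lambda>t. evalF M p0 u t - evalF M p0 c t) * norm x"
    by (rule bilinear_ballD(4)[OF B FreeSp_diff[OF evalF_in_FreeSp evalF_in_FreeSp]])
  also have "\<dots> \<le> dist u c * norm x"
    by (rule mult_right_mono[OF FreeNorm_evalF_diff[OF assms(2,3)] norm_ge_zero])
  finally show "\<bar>etensor (FreeSp M p0) (FreeNorm M p0) (\<lambda>t. evalF M p0 u t - evalF M p0 c t) x B\<bar>
      \<le> dist u c * norm x"
    unfolding etensor_apply[OF B] .
qed

lemma proj_tensor_norm_etensor_evalF_diff: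
  assumes "p0 \<in> M" "u \<in> M" "c \<in> M"
  shows "proj_tensor_norm (FreeSp M p0) (FreeNorm M p0)
           (etensor (FreeSp M p0) (FreeNorm M p0) (\<lambda>t. evalF M p0 u t - evalF M p0 c t) x)
         \<le> dist u c * norm x"
  unfolding proj_tensor_norm_def using etensor_evalF_diff_apply(2)[OF _ assms(2,3)]
  by (intro dual_norm_le[OF bilinear_ball_FreeSp_nonempty[OF assms(1)]])

text \<open>The witness is the normalised dipole (\<delta>_u - \<delta>_c) \<otimes> x1, with u and c from
  exists_separating_cutoff and \<phi> x1 = 1 = norm x1.\<close>

lemma proj_tensor_separating_dipole:
  fixes M Q :: "'a::metric_space set"
  assumes p0: "p0 \<in> M" and M: "\<not> (bounded M \<and> uniformly_discrete M)"
    and X: "\<exists>x::'x. x \<noteq> 0" and Q: "finite Q" "Q \<subseteq> M" and "0 < \<kappa>"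
  obtains y :: "((('a \<Rightarrow> real) \<Rightarrow> real) \<Rightarrow> 'x::real_normed_vector \<Rightarrow> real) \<Rightarrow> real"
  where "y \<in> proj_tensor (FreeSp M p0) (FreeNorm M p0)"
    and "proj_tensor_norm (FreeSp M p0) (FreeNorm M p0) y = 1"
    and "\<And>B. B \<in> bilinear_ball (FreeSp M p0) (FreeNorm M p0) \<Longrightarrow>
           \<exists>B'\<in>bilinear_ball (FreeSp M p0) (FreeNorm M p0).
             (\<forall>q\<in>Q. \<forall>x. B' (evalF M p0 q) x = B (evalF M p0 q) x / (1 + 2 * \<kappa>)) \<and>
             y B' \<le> - 1 / (1 + 2 * \<kappa>)"
proof -
  let ?E = "FreeSp M p0" and ?nE = "FreeNorm M p0"
  let ?Ball = "bilinear_ball ?E ?nE :: ((('a \<Rightarrow> real) \<Rightarrow> real) \<Rightarrow> 'x \<Rightarrow> real) set"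
  define \<theta> where "\<theta> = 1 + 2 * \<kappa>"
  have \<theta>: "\<theta> > 0" using \<open>0 < \<kappa>\<close> unfolding \<theta>_def by simp
  obtain x1 :: 'x and \<phi> where x1: "norm x1 = 1" and \<phi>: "linear \<phi>" "\<phi> x1 = 1" "\<And>x. \<bar>\<phi> x\<bar> \<le> norm x"
    using unit_norming_functional[OF X] by blast
  obtain c u a where cua: "c \<in> M" "u \<in> M" "u \<noteq> c" "separating_cutoff Q \<kappa> c u a" "p0 = c \<or> a p0 = 0"
    using exists_separating_cutoff[OF p0 Q M \<open>0 < \<kappa>\<close>] by blast
  note separate = bilinear_ball_separate[OF p0 _ cua(1,2) Q(2) \<phi>(1,3,2) cua(4,5) less_imp_le[OF \<open>0 < \<kappa>\<close>],
      folded \<theta>_def]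
  define d where "d = (etensor ?E ?nE (\<lambda>t. evalF M p0 u t - evalF M p0 c t) x1
    :: ((('a \<Rightarrow> real) \<Rightarrow> real) \<Rightarrow> 'x \<Rightarrow> real) \<Rightarrow> real)"
  note d_apply = etensor_evalF_diff_apply(1)[OF _ cua(2,1), of _ p0 x1, folded d_def]
  have d: "d \<in> proj_tensor ?E ?nE"
    unfolding d_def by (intro etensor_in_proj_tensor FreeSp_diff evalF_in_FreeSp)
  define n where "n = proj_tensor_norm ?E ?nE d"
  have "n \<le> dist u c"
    using proj_tensor_norm_etensor_evalF_diff[OF p0 cua(2,1), of x1] x1 unfolding n_def d_def by simp
  moreover have "dist u c / \<theta> \<le> n"
  proof -
    have "(\<lambda>e x. 0) \<in> ?Ball" by (rule bilinear_ball_zero[OF FreeNorm_nonneg[OF p0]])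
    then obtain B0 where B0: "B0 \<in> ?Ball" "B0 (evalF M p0 u) x1 - B0 (evalF M p0 c) x1 = - dist u c / \<theta>"
      by (rule separate)
    then have "\<bar>d B0\<bar> = dist u c / \<theta>" using d_apply[OF B0(1)] \<theta> by simp
    then show ?thesis using abs_le_proj_tensor_norm[OF d B0(1)] unfolding n_def by simp
  qed
  moreover have "0 < dist u c / \<theta>" using \<theta> cua(3) by simp
  ultimately have n: "0 < n" "1 \<le> dist u c / n" by (simp_all add: le_divide_eq)
  define y where "y = (\<lambda>t. (1 / n) * d t)"
  have y_sep: "\<exists>B'\<in>?Ball. (\<forall>q\<in>Q. \<forall>x. B' (evalF M p0 q) x = B (evalF M p0 q) x / \<theta>) \<and> y B' \<le> - 1 / \<theta>"
    if B: "B \<in> ?Ball" for B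
  proof -
    obtain B' where B': "B' \<in> ?Ball" "\<And>q x. q \<in> Q \<Longrightarrow> B' (evalF M p0 q) x = B (evalF M p0 q) x / \<theta>"
      "B' (evalF M p0 u) x1 - B' (evalF M p0 c) x1 = - dist u c / \<theta>"
      using separate[OF B] by blast
    have "y B' = - (dist u c / n) / \<theta>" unfolding y_def using d_apply[OF B'(1)] B'(3) by simp
    also have "\<dots> \<le> - 1 / \<theta>" using divide_right_mono[OF n(2), of \<theta>] \<theta> by simp
    finally show ?thesis using B' by blast
  qed
  show thesis
    using that[OF _ _ y_sep[unfolded \<theta>_def]]
      proj_tensor_normalise[OF bilinear_ball_FreeSp_nonempty[OF p0] d n(1)[unfolded n_def]]
    unfolding y_def n_def by blast
qed

lemma octahedral_margin:
  fixes e :: real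
  assumes "0 < e" "e \<le> 1"
  shows "2 - e \<le> (1 - 2 * (e / 8)) / (1 + 2 * (e / 16)) - e / 8 + 1 / (1 + 2 * (e / 16))"
proof -
  have "(2 - e + e / 8) * (1 + 2 * (e / 16)) \<le> 2 - 2 * (e / 8)"
    using assms by (simp add: algebra_simps power2_eq_square)
  then have "2 - e + e / 8 \<le> (2 - 2 * (e / 8)) / (1 + 2 * (e / 16))"
    using assms by (simp add: le_divide_eq)
  also have "\<dots> = (1 - 2 * (e / 8)) / (1 + 2 * (e / 16)) + 1 / (1 + 2 * (e / 16))"
    by (simp add: add_divide_distrib[symmetric])
  finally show ?thesis by simp
qed

lemma proj_tensor_norm_diff_ge:
  assumes "z \<in> proj_tensor E nE" "y \<in> proj_tensor E nE" "B \<in> bilinear_ball E nE"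
  shows "z B - y B \<le> proj_tensor_norm E nE (\<lambda>t. z t - y t)"
proof -
  have "(\<lambda>t. z t - y t) \<in> proj_tensor E nE"
    using proj_tensor_lin_comb[OF assms(1,2), of 1 "-1"] by simp
  from abs_le_proj_tensor_norm[OF this assms(3)] show ?thesis by simp
qed

lemma proj_tensor_FreeSp_far_unit:
  fixes M :: "'a::metric_space set"
    and xs :: "(((('a \<Rightarrow> real) \<Rightarrow> real) \<Rightarrow> 'x::real_normed_vector \<Rightarrow> real) \<Rightarrow> real) list"
  assumes p0: "p0 \<in> M" and M: "\<not> (bounded M \<and> uniformly_discrete M)" and X: "\<exists>x::'x. x \<noteq> 0"
    and xs: "set xs \<subseteq> {z \<in> proj_tensor (FreeSp M p0) (FreeNorm M p0). proj_tensor_norm (FreeSp M p0) (FreeNorm M p0) z = 1}"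
    and e: "0 < e" "e \<le> 1"
  obtains y where "y \<in> proj_tensor (FreeSp M p0) (FreeNorm M p0)" "proj_tensor_norm (FreeSp M p0) (FreeNorm M p0) y = 1"
    and "\<And>z. z \<in> set xs \<Longrightarrow> 2 - e \<le> proj_tensor_norm (FreeSp M p0) (FreeNorm M p0) (\<lambda>t. z t - y t)"
proof -
  let ?E = "FreeSp M p0" and ?nE = "FreeNorm M p0"
  let ?Ball = "bilinear_ball ?E ?nE :: ((('a \<Rightarrow> real) \<Rightarrow> real) \<Rightarrow> 'x \<Rightarrow> real) set"
  define \<theta> where "\<theta> = 1 + 2 * (e / 16)"
  have pos: "0 < e / 8" "0 < e / 16" "\<theta> > 0" using e unfolding \<theta>_def by simp_all
  have "\<forall>z\<in>set xs. \<exists>Q B. finite Q \<and> Q \<subseteq> M \<and> B \<in> ?Ball \<and> (\<forall>B'\<in>?Ball.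
      (\<forall>q\<in>Q. \<forall>x. B' (evalF M p0 q) x = B (evalF M p0 q) x / \<theta>) \<longrightarrow> (1 - 2 * (e / 8)) / \<theta> - e / 8 \<le> z B')"
  proof
    fix z assume "z \<in> set xs"
    then have "z \<in> proj_tensor ?E ?nE" "proj_tensor_norm ?E ?nE z = 1" using xs by auto
    from proj_tensor_norming_on_points[OF p0 this pos(1,3)]
    show "\<exists>Q B. finite Q \<and> Q \<subseteq> M \<and> B \<in> ?Ball \<and> (\<forall>B'\<in>?Ball.
      (\<forall>q\<in>Q. \<forall>x. B' (evalF M p0 q) x = B (evalF M p0 q) x / \<theta>) \<longrightarrow> (1 - 2 * (e / 8)) / \<theta> - e / 8 \<le> z B')"
      by metis
  qed
  then obtain Q where "\<forall>z\<in>set xs. \<exists>B. finite (Q z) \<and> Q z \<subseteq> M \<and> B \<in> ?Ball \<and> (\<forall>B'\<in>?Ball.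
      (\<forall>q\<in>Q z. \<forall>x. B' (evalF M p0 q) x = B (evalF M p0 q) x / \<theta>) \<longrightarrow> (1 - 2 * (e / 8)) / \<theta> - e / 8 \<le> z B')"
    by (rule bchoice[THEN exE])
  then obtain B where QB: "\<forall>z\<in>set xs. finite (Q z) \<and> Q z \<subseteq> M \<and> B z \<in> ?Ball \<and> (\<forall>B'\<in>?Ball.
      (\<forall>q\<in>Q z. \<forall>x. B' (evalF M p0 q) x = B z (evalF M p0 q) x / \<theta>) \<longrightarrow> (1 - 2 * (e / 8)) / \<theta> - e / 8 \<le> z B')"
    by (rule bchoice[THEN exE])
  have "finite (\<Union>z\<in>set xs. Q z)" "(\<Union>z\<in>set xs. Q z) \<subseteq> M" using QB by auto
  note this pos(2)
  then obtain y where y: "y \<in> proj_tensor ?E ?nE" "proj_tensor_norm ?E ?nE y = 1"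
    and sep: "\<And>B. B \<in> ?Ball \<Longrightarrow> \<exists>B'\<in>?Ball.
      (\<forall>q\<in>(\<Union>z\<in>set xs. Q z). \<forall>x. B' (evalF M p0 q) x = B (evalF M p0 q) x / \<theta>) \<and> y B' \<le> - 1 / \<theta>"
    unfolding \<theta>_def by (rule proj_tensor_separating_dipole[OF p0 M X]) blast
  have "2 - e \<le> proj_tensor_norm ?E ?nE (\<lambda>t. z t - y t)" if z: "z \<in> set xs" for z
  proof -
    obtain B' where B': "B' \<in> ?Ball" "\<forall>q\<in>Q z. \<forall>x. B' (evalF M p0 q) x = B z (evalF M p0 q) x / \<theta>"
      "y B' \<le> - 1 / \<theta>"
      using sep[of "B z"] QB z by blast
    then have "(1 - 2 * (e / 8)) / \<theta> - e / 8 + 1 / \<theta> \<le> z B' - y B'" using QB z by fastforce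
    also have "\<dots> \<le> proj_tensor_norm ?E ?nE (\<lambda>t. z t - y t)"
      using proj_tensor_norm_diff_ge[OF _ y(1) B'(1)] xs z by blast
    finally show ?thesis using octahedral_margin[OF e] unfolding \<theta>_def by linarith
  qed
  with y show thesis by (rule that)
qed

theorem theorem1p2:
  fixes M :: "'a::metric_space set" and p0 :: 'a
  assumes "p0 \<in> M"
    and "\<not> (bounded M \<and> uniformly_discrete M)"
    and "\<exists>x::'x::banach. x \<noteq> 0"
  shows "octahedral (proj_tensor (FreeSp M p0) (FreeNorm M p0) :: ((((('a \<Rightarrow> real) \<Rightarrow> real) \<Rightarrow> 'x \<Rightarrow> real) \<Rightarrow> real) set))
                    (proj_tensor_norm (FreeSp M p0) (FreeNorm M p0))"
proof -
  have "\<exists>y\<in>proj_tensor (FreeSp M p0) (FreeNorm M p0). proj_tensor_norm (FreeSp M p0) (FreeNorm M p0) y = 1 \<and>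
      (\<forall>z\<in>set xs. 2 - \<epsilon> \<le> proj_tensor_norm (FreeSp M p0) (FreeNorm M p0) (\<lambda>t. z t - y t))"
    if xs: "set xs \<subseteq> {z \<in> proj_tensor (FreeSp M p0) (FreeNorm M p0). proj_tensor_norm (FreeSp M p0) (FreeNorm M p0) z = 1}"
      and "\<epsilon> > 0"
    for xs :: "((((('a \<Rightarrow> real) \<Rightarrow> real) \<Rightarrow> 'x \<Rightarrow> real) \<Rightarrow> real)) list" and \<epsilon> :: real
  proof -
    obtain y where "y \<in> proj_tensor (FreeSp M p0) (FreeNorm M p0)"
      "proj_tensor_norm (FreeSp M p0) (FreeNorm M p0) y = 1"
      "\<And>z. z \<in> set xs \<Longrightarrow> 2 - min \<epsilon> 1 \<le> proj_tensor_norm (FreeSp M p0) (FreeNorm M p0) (\<lambda>t. z t - y t)"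
      using proj_tensor_FreeSp_far_unit[OF assms xs, of "min \<epsilon> 1"] \<open>\<epsilon> > 0\<close> by auto
    then show ?thesis by force
  qed
  then show ?thesis unfolding octahedral_def by blast
qed

end
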